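(* Let $1\le p\le 2$, let $f\in\mathcal{L}^p(\mathbb{R})$ be real-valued, and suppose $t\mapsto t f(t)$ belongs to $\mathcal{L}^p(\mathbb{R})\cap BV_0(\mathbb{R})$. Then, after redefining $\mathcal{F}^S_p(f)$ on a set of measure zero, $\mathcal{F}^S_p(f)\in ACG^*(\mathbb{R})$.
   Context: $BV_0(\mathbb{R})$: real functions of bounded variation on $\mathbb{R}$ vanishing at $\pm\infty$. $\mathcal{F}_1(f)(s)=\frac{1}{\sqrt{2\pi}}\int_{\mathbb{R}}e^{-isx}f(x)dx$ for $f\in\mathcal{L}^1$; $\mathcal{F}_2$ is the Plancherel extension to $\mathcal{L}^2$; for $1<p<2$, $\mathcal{F}_p(f)=\mathcal{F}_1(f_1)+\mathcal{F}_2(f_2)$ for any decomposition $f=f_1+f_2$, $f_1\in\mathcal{L}^1\cap\mathcal{L}^p$, $f_2\in\mathcal{L}^2\cap\mathcal{L}^p$. For real-valued $f$, the Sine Fourier transform is $\mathcal{F}^S_p(f):=-\mathrm{Im}\,\mathcal{F}_p(f)$, so $\mathcal{F}_p(f)=\mathcal{F}^C_p(f)-i\mathcal{F}^S_p(f)$ with $\mathcal{F}^C_p(f)=\mathrm{Re}\,\mathcal{F}_p(f)$. A function $F$ is $AC^*$ on a set $E$ if for every $\epsilon>0$ there is $\eta>0$ such that for every finite family of nonoverlapping intervals $[c_k,d_k]$ with endpoints in $E$ and $\sum(d_k-c_k)<\eta$, $\sum_k\omega(F,[c_k,d_k])<\epsilon$ ($\omega$ = oscillation); $F$ is $ACG^*$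 on $\mathbb{R}$ if $F$ is continuous and $\mathbb{R}$ is a countable union of sets on each of which $F$ is $AC^*$. *)

theory Defs
  imports "HOL-Analysis.Analysis"
begin

definition Lp_real :: "real \<Rightarrow> (real \<Rightarrow> real) \<Rightarrow> bool" where
  "Lp_real p f \<longleftrightarrow> f \<in> borel_measurable lebesgue \<and> integrable lebesgue (\<lambda>x. \<bar>f x\<bar> powr p)"

definition bounded_variation_R :: "(real \<Rightarrow> real) \<Rightarrow> bool" where
  "bounded_variation_R g \<longleftrightarrow>
     (\<exists>M. \<forall>(n::nat) (x::nat \<Rightarrow> real). (\<forall>k<n. x k \<le> x (Suc k)) \<longrightarrow>
        (\<Sum>k<n. \<bar>g (x (Suc k)) - g (x k)\<bar>) \<le> M)"

definition BV0 :: "(real \<Rightarrow> real) \<Rightarrow> bool" where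
  "BV0 g \<longleftrightarrow> bounded_variation_R g \<and> (g \<longlongrightarrow> 0) at_top \<and> (g \<longlongrightarrow> 0) at_bot"

definition fourier1 :: "(real \<Rightarrow> real) \<Rightarrow> real \<Rightarrow> complex" where
  "fourier1 f s = (LINT x|lebesgue. cis (- s * x) * complex_of_real (f x)) / complex_of_real (sqrt (2 * pi))"

text \<open>H is (a version of) the Plancherel transform F_2(f) of f \<in> L^2:
  the L^2-limit of the L^1 transforms of the truncations f \<cdot> 1_[-n,n].\<close>
definition is_fourier2 :: "(real \<Rightarrow> real) \<Rightarrow> (real \<Rightarrow> complex) \<Rightarrow> bool" where
  "is_fourier2 f H \<longleftrightarrow>
     H \<in> borel_measurable lebesgue \<and> integrable lebesgue (\<lambda>s. (cmod (H s))\<^sup>2) \<and>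
     (\<lambda>n::nat. LINT s|lebesgue.
         (cmod (fourier1 (\<lambda>x. indicator {- real n..real n} x * f x) s - H s))\<^sup>2)
       \<longlonglongrightarrow> 0"

text \<open>G is a version of F_p(f), 1 \<le> p \<le> 2 (determined up to null sets).\<close>
definition is_fourier_p :: "real \<Rightarrow> (real \<Rightarrow> real) \<Rightarrow> (real \<Rightarrow> complex) \<Rightarrow> bool" where
  "is_fourier_p p f G \<longleftrightarrow>
     (if p = 1 then (AE s in lebesgue. G s = fourier1 f s)
      else (\<exists>f1 f2 H. (\<forall>x. f x = f1 x + f2 x) \<and>
              integrable lebesgue f1 \<and> Lp_real p f1 \<and> Lp_real 2 f2 \<and> Lp_real p f2 \<and>
              is_fourier2 f2 H \<and>
              (AE s in lebesgue. G s = fourier1 f1 s + H s)))"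

definition osc :: "(real \<Rightarrow> real) \<Rightarrow> real \<Rightarrow> real \<Rightarrow> real" where
  "osc F c d = (SUP x\<in>{c..d}. F x) - (INF x\<in>{c..d}. F x)"

definition AC_star_on :: "(real \<Rightarrow> real) \<Rightarrow> real set \<Rightarrow> bool" where
  "AC_star_on F E \<longleftrightarrow>
     (\<forall>\<epsilon>>0. \<exists>\<eta>>0. \<forall>(n::nat) (c::nat \<Rightarrow> real) (d::nat \<Rightarrow> real).
        (\<forall>k<n. c k \<in> E \<and> d k \<in> E \<and> c k \<le> d k) \<and>
        (\<forall>i<n. \<forall>j<n. i \<noteq> j \<longrightarrow> d i \<le> c j \<or> d j \<le> c i) \<and>
        (\<Sum>k<n. d k - c k) < \<eta> \<longrightarrow>
        (\<Sum>k<n. osc F (c k) (d k)) < \<epsilon>)"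

definition ACG_star :: "(real \<Rightarrow> real) \<Rightarrow> bool" where
  "ACG_star F \<longleftrightarrow> continuous_on UNIV F \<and>
     (\<exists>E::nat \<Rightarrow> real set. (\<Union>n. E n) = UNIV \<and> (\<forall>n. AC_star_on F (E n)))"

end

theory Submission
  imports Defs "HOL-Probability.Sinc_Integral"
begin

text \<open>Pointwise \<open>\<bar>f t\<bar> \<le> \<bar>f t\<bar>\<^sup>p + \<bar>t f t\<bar>\<^sup>p + 2 / (1 + t\<^sup>2)\<close>, so \<open>f\<close> is integrable and
  \<open>F\<^sub>p f\<close> agrees a.e. with the \<open>L\<^sup>1\<close> transform \<open>F\<^sub>1 f\<close>. (For the Plancherel part this uses
  that \<open>F\<^sub>1\<close> of a compactly supported \<open>L\<^sup>1 \<inter> L\<^sup>2\<close> function is square integrable, by Bessel's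
  inequality for the exponentials orthogonal on \<open>[-T, T]\<close>, and Fatou's lemma.)
  With \<open>g t = t f t\<close>, \<open>-Im F\<^sub>1 f s\<close> is a multiple of \<open>\<integral> g x / x \<cdot> sin (s x) dx\<close>, whose increments
  are \<open>\<integral>\<^bsub>s\<^sub>1\<^esub>\<^bsup>s\<^sub>2\<^esup> \<integral> g x cos (u x) dx du\<close>. Writing \<open>g\<close> as a difference of bounded monotone
  functions, a second mean value estimate gives \<open>\<bar>\<integral>\<^bsub>-R\<^esub>\<^bsup>R\<^esup> g x cos (u x) dx\<bar> \<le> C / \<bar>u\<bar>\<close>
  uniformly in \<open>R\<close>, so the sine transform is Lipschitz on \<open>{\<bar>s\<bar> \<ge> \<delta>}\<close>. Being continuous,
  it is then \<open>ACG\<^sub>*\<close> with respect to the sets \<open>{0} \<union> {\<bar>s\<bar> \<ge> 1 / (n + 1)}\<close>.\<close>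

section \<open>Functions of bounded variation\<close>

lemma bounded_variation_R_diff_bounded:
  assumes "bounded_variation_R g"
  obtains M where "\<And>x y. \<bar>g y - g x\<bar> \<le> M"
proof -
  obtain M where M: "\<And>n (p::nat \<Rightarrow> real). \<forall>k<n. p k \<le> p (Suc k) \<Longrightarrow>
      (\<Sum>k<n. \<bar>g (p (Suc k)) - g (p k)\<bar>) \<le> M"
    using assms unfolding bounded_variation_R_def by blast
  have le: "\<bar>g y - g x\<bar> \<le> M" if "x \<le> y" for x y
    using M[of 1 "\<lambda>k. if k = 0 then x else y"] that by simp
  have "\<bar>g y - g x\<bar> \<le> M" for x y
    using le[of x y] le[of y x] by (cases "x \<le> y") (auto simp: abs_minus_commute)
  then show thesis by (rule that)
qed

lemma bounded_variation_R_bounded: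
  assumes "bounded_variation_R g"
  obtains B where "\<And>x. \<bar>g x\<bar> \<le> B"
proof -
  obtain M where "\<And>x y. \<bar>g y - g x\<bar> \<le> M"
    using bounded_variation_R_diff_bounded[OF assms] by blast
  then have "\<bar>g x\<bar> \<le> \<bar>g 0\<bar> + M" for x
    using abs_triangle_ineq2[of "g x" "g 0"] by (metis add.commute diff_le_eq order_trans)
  then show thesis by (rule that)
qed

definition variation_sums :: "(real \<Rightarrow> real) \<Rightarrow> real \<Rightarrow> real set" where
  "variation_sums g x = {\<Sum>k<n. \<bar>g (p (Suc k)) - g (p k)\<bar> | n p.
      (\<forall>k<n. p k \<le> p (Suc k)) \<and> p n \<le> x}"

definition variation_upto :: "(real \<Rightarrow> real) \<Rightarrow> real \<Rightarrow> real" where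
  "variation_upto g x = Sup (variation_sums g x)"

lemma zero_in_variation_sums: "0 \<in> variation_sums g x"
  unfolding variation_sums_def by (intro CollectI exI[of _ 0] exI[of _ "\<lambda>_. x"]) simp

lemma variation_sums_le:
  assumes "bounded_variation_R g"
  obtains M where "\<And>x s. s \<in> variation_sums g x \<Longrightarrow> s \<le> M"
proof -
  obtain M where M: "\<And>n (p::nat \<Rightarrow> real). \<forall>k<n. p k \<le> p (Suc k) \<Longrightarrow>
      (\<Sum>k<n. \<bar>g (p (Suc k)) - g (p k)\<bar>) \<le> M"
    using assms unfolding bounded_variation_R_def by blast
  have "s \<le> M" if "s \<in> variation_sums g x" for x s
    using that unfolding variation_sums_def by (auto intro: M)
  then show thesis by (rule that)
qed

lemma variation_upto_bounds:
  assumes "bounded_variation_R g"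
  obtains M where "\<And>x. 0 \<le> variation_upto g x" "\<And>x. variation_upto g x \<le> M"
proof -
  obtain M where M: "\<And>x s. s \<in> variation_sums g x \<Longrightarrow> s \<le> M"
    using variation_sums_le[OF assms] by blast
  have "bdd_above (variation_sums g x)" for x
    by (rule bdd_aboveI[where M=M]) (rule M)
  then have "0 \<le> variation_upto g x" for x
    unfolding variation_upto_def by (intro cSup_upper zero_in_variation_sums)
  moreover have "variation_upto g x \<le> M" for x
    unfolding variation_upto_def using zero_in_variation_sums[of g x] by (intro cSup_least M) auto
  ultimately show thesis by (rule that)
qed

text \<open>Appending the points \<open>x \<le> y\<close> to a partition ending below \<open>x\<close> adds at least \<open>\<bar>g y - g x\<bar>\<close>.\<close>

lemma variation_upto_increment:
  assumes "bounded_variation_R g" and "x \<le> y"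
  shows "variation_upto g x + \<bar>g y - g x\<bar> \<le> variation_upto g y"
proof -
  obtain M where M: "\<And>x s. s \<in> variation_sums g x \<Longrightarrow> s \<le> M"
    using variation_sums_le[OF assms(1)] by blast
  have bdd: "bdd_above (variation_sums g y)"
    by (rule bdd_aboveI[where M=M]) (rule M)
  have step: "s + \<bar>g y - g x\<bar> \<le> variation_upto g y" if s_in: "s \<in> variation_sums g x" for s
  proof -
    obtain n p where p: "\<forall>k<n. p k \<le> p (Suc k)" "p n \<le> x"
      and s: "s = (\<Sum>k<n. \<bar>g (p (Suc k)) - g (p k)\<bar>)"
      using s_in unfolding variation_sums_def by blast
    define q where "q k = (if k \<le> n then p k else if k = Suc n then x else y)" for k
    have "(\<Sum>k<n. \<bar>g (q (Suc k)) - g (q k)\<bar>) = s"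
      unfolding s by (rule sum.cong) (auto simp: q_def)
    then have sum_q: "(\<Sum>k<Suc (Suc n). \<bar>g (q (Suc k)) - g (q k)\<bar>) =
        s + \<bar>g x - g (p n)\<bar> + \<bar>g y - g x\<bar>"
      by (simp add: q_def)
    have "\<forall>k<Suc (Suc n). q k \<le> q (Suc k)"
      using p assms(2) by (auto simp: q_def less_Suc_eq)
    then have "(\<Sum>k<Suc (Suc n). \<bar>g (q (Suc k)) - g (q k)\<bar>) \<in> variation_sums g y"
      unfolding variation_sums_def by (intro CollectI exI[of _ "Suc (Suc n)"] exI[of _ q]) (simp add: q_def)
    then have "(\<Sum>k<Suc (Suc n). \<bar>g (q (Suc k)) - g (q k)\<bar>) \<le> variation_upto g y"
      unfolding variation_upto_def by (rule cSup_upper[OF _ bdd])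
    then show ?thesis using sum_q by linarith
  qed
  have "variation_upto g x \<le> variation_upto g y - \<bar>g y - g x\<bar>"
    unfolding variation_upto_def[of g x]
  proof (rule cSup_least)
    show "variation_sums g x \<noteq> {}" using zero_in_variation_sums by blast
  qed (simp add: le_diff_eq step)
  then show ?thesis by linarith
qed

lemma bounded_variation_R_eq_diff_mono:
  assumes "bounded_variation_R g"
  obtains \<phi> \<psi> B where "mono \<phi>" "mono \<psi>" "\<And>x. \<bar>\<phi> x\<bar> \<le> B" "\<And>x. \<bar>\<psi> x\<bar> \<le> B"
    "\<And>x. g x = \<phi> x - \<psi> x"
proof -
  obtain M where M: "\<And>x. 0 \<le> variation_upto g x" "\<And>x. variation_upto g x \<le> M"
    using variation_upto_bounds[OF assms] by blast
  obtain B where B: "\<And>x. \<bar>g x\<bar> \<le> B"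
    using bounded_variation_R_bounded[OF assms] by blast
  have "variation_upto g x + g x \<le> variation_upto g y + g y"
    "variation_upto g x - g x \<le> variation_upto g y - g y" if "x \<le> y" for x y
    using variation_upto_increment[OF assms that]
      abs_ge_self[of "g y - g x"] abs_ge_minus_self[of "g y - g x"] by linarith+
  then have "mono (\<lambda>x. (variation_upto g x + g x) / 2)" "mono (\<lambda>x. (variation_upto g x - g x) / 2)"
    by (auto intro!: monoI divide_right_mono)
  moreover have "\<bar>(variation_upto g x + g x) / 2\<bar> \<le> M + B"
    "\<bar>(variation_upto g x - g x) / 2\<bar> \<le> M + B" for x
    using M(1,2)[of x] B[of x] by auto
  moreover have "g x = (variation_upto g x + g x) / 2 - (variation_upto g x - g x) / 2" for x
    by (simp add: field_simps)
  ultimately show thesis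
    by (rule that[of "\<lambda>x. (variation_upto g x + g x) / 2" "\<lambda>x. (variation_upto g x - g x) / 2"
          "M + B"])
qed

lemma bounded_variation_R_borel:
  assumes "bounded_variation_R g"
  shows "g \<in> borel_measurable borel"
proof -
  obtain \<phi> \<psi> B where "mono \<phi>" "mono \<psi>" "\<And>x. \<bar>\<phi> x\<bar> \<le> B" "\<And>x. \<bar>\<psi> x\<bar> \<le> B"
    and g: "\<And>x. g x = \<phi> x - \<psi> x"
    using bounded_variation_R_eq_diff_mono[OF assms] by blast
  then have [measurable]: "\<phi> \<in> borel_measurable borel" "\<psi> \<in> borel_measurable borel"
    using borel_measurable_mono by blast+
  have "g = (\<lambda>x. \<phi> x - \<psi> x)" using g by auto
  then show ?thesis by simp
qed


section \<open>Cosine integrals against functions of bounded variation\<close>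

lemma integrable_indicator_Icc_times_bounded:
  fixes h :: "real \<Rightarrow> real"
  assumes "h \<in> borel_measurable borel" "\<And>x. x \<in> {a..b} \<Longrightarrow> \<bar>h x\<bar> \<le> K"
  shows "integrable lborel (\<lambda>x. indicator {a..b} x * h x)"
  by (rule integrableI_bounded_set[where A="{a..b}" and B=K])
    (use assms in \<open>auto simp: indicator_def emeasure_lborel_Icc_eq\<close>)

text \<open>Unlike \<open>integral_abs_bound_integral\<close>, no integrability of \<open>h\<close> is needed.\<close>

lemma abs_integral_le_integral:
  fixes h :: "'a \<Rightarrow> real"
  assumes "integrable M b" "\<And>x. \<bar>h x\<bar> \<le> b x"
  shows "\<bar>integral\<^sup>L M h\<bar> \<le> integral\<^sup>L M b"
proof -
  have "\<bar>integral\<^sup>L M h\<bar> \<le> integral\<^sup>L M (\<lambda>x. \<bar>h x\<bar>)" by (rule integral_abs_bound)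
  also have "\<dots> \<le> integral\<^sup>L M b"
    using assms by (intro integral_mono') (auto intro: order_trans[OF abs_ge_zero])
  finally show ?thesis .
qed

lemma integral_indicator_cos:
  fixes u a b :: real
  assumes "a \<le> b" "u \<noteq> 0"
  shows "(LINT x|lborel. indicator {a..b} x * cos (u * x)) = (sin (u * b) - sin (u * a)) / u"
proof -
  have "(LINT x|lborel. indicator {a..b} x *\<^sub>R cos (u * x)) = sin (u * b) / u - sin (u * a) / u"
  proof (rule integral_FTC_atLeastAtMost[OF assms(1)])
    fix x show "((\<lambda>x. sin (u * x) / u) has_vector_derivative cos (u * x)) (at x within {a..b})"
      using assms(2) by (auto intro!: derivative_eq_intros
          simp: has_real_derivative_iff_has_vector_derivative[symmetric])
  qed (intro continuous_intros)
  then show ?thesis by (simp add: diff_divide_distrib)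
qed

lemma abs_integral_indicator_cos_le:
  fixes u a b :: real
  assumes "a \<le> b" "u \<noteq> 0"
  shows "\<bar>LINT x|lborel. indicator {a..b} x * cos (u * x)\<bar> \<le> 2 / \<bar>u\<bar>"
proof -
  have "\<bar>sin (u * b) - sin (u * a)\<bar> \<le> 2"
    using abs_sin_le_one[of "u * b"] abs_sin_le_one[of "u * a"] by linarith
  then show ?thesis
    using integral_indicator_cos[OF assms] assms(2) by (simp add: abs_div divide_right_mono)
qed

lemma integrable_lborel_pair_vanishing_off_box:
  fixes G :: "real \<Rightarrow> real \<Rightarrow> real"
  assumes "case_prod G \<in> borel_measurable (lborel \<Otimes>\<^sub>M lborel)"
    and "\<And>x y. \<bar>G x y\<bar> \<le> B" and "\<And>x y. (x, y) \<notin> {a..b} \<times> {c..d} \<Longrightarrow> G x y = 0"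
  shows "integrable (lborel \<Otimes>\<^sub>M lborel) (case_prod G)"
proof (rule integrableI_bounded_set[where A="{a..b} \<times> {c..d}" and B=B])
  show "emeasure (lborel \<Otimes>\<^sub>M lborel) ({a..b} \<times> {c..d}) < \<infinity>"
    by (subst lborel.emeasure_pair_measure_Times)
      (auto simp: ennreal_mult_less_top emeasure_lborel_Icc_eq)
  show "AE z in lborel \<Otimes>\<^sub>M lborel. z \<in> {a..b} \<times> {c..d} \<longrightarrow> norm (case_prod G z) \<le> B"
    using assms(2) by (intro AE_I2) (auto split: prod.split)
  show "AE z in lborel \<Otimes>\<^sub>M lborel. z \<notin> {a..b} \<times> {c..d} \<longrightarrow> case_prod G z = 0"
    using assms(3) by (intro AE_I2) (auto split: prod.split)
qed (use assms(1) in auto)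

text \<open>The superlevel set \<open>{x \<in> {a..b}. y < \<psi> x}\<close> of a monotone \<open>\<psi>\<close> is an interval
  with right end point \<open>b\<close>, up to its left end point.\<close>

lemma abs_integral_superlevel_cos_le:
  fixes \<psi> :: "real \<Rightarrow> real"
  assumes "mono \<psi>" "a \<le> b" "u \<noteq> 0"
  shows "\<bar>LINT x|lborel. indicator {a..b} x * indicator {x. y < \<psi> x} x * cos (u * x)\<bar> \<le> 2 / \<bar>u\<bar>"
proof (cases "{x\<in>{a..b}. y < \<psi> x} = {}")
  case True
  then have "indicator {a..b} x * indicator {x. y < \<psi> x} x * cos (u * x) = 0" for x
    by (auto simp: indicator_def)
  then show ?thesis by (simp only: integral_zero) simp
next
  case False
  define A where "A = {x\<in>{a..b}. y < \<psi> x}"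
  define c where "c = Inf A"
  have A_ne: "A \<noteq> {}" using False A_def by simp
  have bdd: "bdd_below A" unfolding A_def by (rule bdd_belowI[of _ a]) auto
  have c_le: "c \<le> z" if "z \<in> A" for z unfolding c_def using that bdd by (rule cInf_lower)
  have ac: "a \<le> c" unfolding c_def using A_ne by (intro cInf_greatest) (auto simp: A_def)
  obtain z where "z \<in> A" using A_ne by blast
  then have cb: "c \<le> b" using c_le[of z] by (auto simp: A_def)
  have in_A: "x \<in> A" if x: "c < x" "x \<le> b" for x
  proof -
    obtain z where z: "z \<in> A" "z < x" using cInf_lessD[OF A_ne, of x] x unfolding c_def by blast
    then have "\<psi> z \<le> \<psi> x" using assms(1) by (simp add: mono_def)
    then show ?thesis using z x unfolding A_def by auto
  qed
  have [measurable]: "\<psi> \<in> borel_measurable borel"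
    using borel_measurable_mono assms(1) by blast
  have "AE x in lborel. indicator {a..b} x * indicator {x. y < \<psi> x} x * cos (u * x) =
      indicator {c..b} x * cos (u * x)"
    using AE_lborel_singleton[of c]
  proof eventually_elim
    case (elim x)
    then consider "x < c" | "c < x" by linarith
    then show ?case
      using in_A c_le ac by cases (fastforce simp: A_def indicator_def)+
  qed
  then have "(LINT x|lborel. indicator {a..b} x * indicator {x. y < \<psi> x} x * cos (u * x)) =
      (LINT x|lborel. indicator {c..b} x * cos (u * x))"
    by (rule integral_cong_AE[rotated 2]) measurable
  then show ?thesis using abs_integral_indicator_cos_le[OF cb assms(3)] by simp
qed

text \<open>Layer cake: \<open>\<psi> x = \<integral>\<^sub>0\<^sup>B 1{y < \<psi> x} dy\<close>, and Fubini reduces the claim to the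
  superlevel sets of \<open>\<psi>\<close>.\<close>

lemma abs_integral_mono_nonneg_cos_le:
  fixes \<psi> :: "real \<Rightarrow> real"
  assumes mono: "mono \<psi>" and ab: "a \<le> b" and u: "u \<noteq> 0"
    and range: "\<And>x. x \<in> {a..b} \<Longrightarrow> 0 \<le> \<psi> x \<and> \<psi> x \<le> B"
  shows "\<bar>LINT x|lborel. indicator {a..b} x * (\<psi> x * cos (u * x))\<bar> \<le> B * (2 / \<bar>u\<bar>)"
proof -
  have [measurable]: "\<psi> \<in> borel_measurable borel" using borel_measurable_mono mono by blast
  have B: "0 \<le> B" using range[of a] ab by auto
  define F where "F x y = indicator {a..b} x * indicator {0..B} y * indicator {y. y < \<psi> x} y *
      cos (u * x)" for x y
  have inner: "(LINT y|lborel. F x y) = indicator {a..b} x * (\<psi> x * cos (u * x))" for x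
  proof (cases "x \<in> {a..b}")
    case True
    then have "indicator {0..B} y * indicator {y. y < \<psi> x} y = (indicator {0..<\<psi> x} y :: real)" for y
      using range[OF True] by (auto simp: indicator_def)
    then show ?thesis using True range[OF True] by (simp add: F_def)
  qed (simp add: F_def)
  have int: "integrable (lborel \<Otimes>\<^sub>M lborel) (case_prod F)"
  proof (rule integrable_lborel_pair_vanishing_off_box[where B=1 and a=a and b=b and c=0 and d=B])
    show "case_prod F \<in> borel_measurable (lborel \<Otimes>\<^sub>M lborel)" unfolding F_def by measurable
  qed (auto simp: F_def indicator_def abs_mult)
  have "(LINT x|lborel. indicator {a..b} x * (\<psi> x * cos (u * x))) =
      (LINT x|lborel. LINT y|lborel. F x y)"
    using inner by simp
  also have "\<dots> = (LINT y|lborel. LINT x|lborel. F x y)"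
    using lborel_pair.Fubini_integral[OF int] by simp
  also have "\<dots> = (LINT y|lborel. indicator {0..B} y *
      (LINT x|lborel. indicator {a..b} x * indicator {x. y < \<psi> x} x * cos (u * x)))"
    unfolding F_def by (intro Bochner_Integration.integral_cong) (auto simp: indicator_def)
  also have "\<bar>\<dots>\<bar> \<le> (LINT y|lborel. indicator {0..B} y * (2 / \<bar>u\<bar>))"
  proof (rule abs_integral_le_integral)
    show "integrable lborel (\<lambda>y. indicator {0..B} y * (2 / \<bar>u\<bar>))"
      by (rule integrable_indicator_Icc_times_bounded[where K="2 / \<bar>u\<bar>"]) auto
  qed (use abs_integral_superlevel_cos_le[OF mono ab u] in \<open>auto simp: indicator_def\<close>)
  also have "\<dots> = B * (2 / \<bar>u\<bar>)" using B by simp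
  finally show ?thesis .
qed

lemma abs_integral_mono_cos_le:
  fixes \<phi> :: "real \<Rightarrow> real"
  assumes mono: "mono \<phi>" and ab: "a \<le> b" and u: "u \<noteq> 0"
  shows "\<bar>LINT x|lborel. indicator {a..b} x * \<phi> x * cos (u * x)\<bar> \<le>
    (\<bar>\<phi> a\<bar> + (\<phi> b - \<phi> a)) * (2 / \<bar>u\<bar>)"
proof -
  have [measurable]: "\<phi> \<in> borel_measurable borel" using borel_measurable_mono mono by blast
  define \<psi> where "\<psi> x = \<phi> x - \<phi> a" for x
  have mono_\<psi>: "mono \<psi>" using mono unfolding \<psi>_def mono_def by auto
  have range: "0 \<le> \<psi> x \<and> \<psi> x \<le> \<phi> b - \<phi> a" if "x \<in> {a..b}" for x
    using that mono unfolding \<psi>_def mono_def by auto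
  have int1: "integrable lborel (\<lambda>x. indicator {a..b} x * cos (u * x))"
    by (rule integrable_indicator_Icc_times_bounded[where K=1]) auto
  have int2: "integrable lborel (\<lambda>x. indicator {a..b} x * (\<psi> x * cos (u * x)))"
  proof (rule integrable_indicator_Icc_times_bounded[where K="\<phi> b - \<phi> a"])
    show "\<bar>\<psi> x * cos (u * x)\<bar> \<le> \<phi> b - \<phi> a" if "x \<in> {a..b}" for x
      using range[OF that] abs_cos_le_one[of "u * x"]
      by (simp add: abs_mult) (meson abs_cos_le_one mult_left_le order_trans)
  qed (simp add: \<psi>_def)
  let ?I1 = "LINT x|lborel. indicator {a..b} x * cos (u * x)"
  let ?I2 = "LINT x|lborel. indicator {a..b} x * (\<psi> x * cos (u * x))"
  have "(LINT x|lborel. indicator {a..b} x * \<phi> x * cos (u * x)) =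
      (LINT x|lborel. \<phi> a * (indicator {a..b} x * cos (u * x)) +
        indicator {a..b} x * (\<psi> x * cos (u * x)))"
    by (rule Bochner_Integration.integral_cong) (auto simp: \<psi>_def algebra_simps)
  also have "\<dots> = \<phi> a * ?I1 + ?I2"
    using int1 int2 by simp
  finally have split: "(LINT x|lborel. indicator {a..b} x * \<phi> x * cos (u * x)) = \<phi> a * ?I1 + ?I2" .
  have "\<bar>\<phi> a * ?I1\<bar> \<le> \<bar>\<phi> a\<bar> * (2 / \<bar>u\<bar>)"
    unfolding abs_mult by (rule mult_left_mono[OF abs_integral_indicator_cos_le[OF ab u]]) simp
  moreover have "\<bar>?I2\<bar> \<le> (\<phi> b - \<phi> a) * (2 / \<bar>u\<bar>)"
    by (rule abs_integral_mono_nonneg_cos_le[OF mono_\<psi> ab u range])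
  ultimately show ?thesis
    unfolding split distrib_right using abs_triangle_ineq[of "\<phi> a * ?I1" ?I2] by linarith
qed

lemma bounded_variation_R_cos_integral_bound:
  assumes "bounded_variation_R g"
  obtains C where "C \<ge> 0"
    "\<And>R u. u \<noteq> 0 \<Longrightarrow> \<bar>LINT x|lborel. indicator {-R..R} x * g x * cos (u * x)\<bar> \<le> C / \<bar>u\<bar>"
proof -
  obtain \<phi> \<psi> B where mono: "mono \<phi>" "mono \<psi>" and bd: "\<And>x. \<bar>\<phi> x\<bar> \<le> B" "\<And>x. \<bar>\<psi> x\<bar> \<le> B"
    and g: "\<And>x. g x = \<phi> x - \<psi> x"
    using bounded_variation_R_eq_diff_mono[OF assms] by blast
  have [measurable]: "\<phi> \<in> borel_measurable borel" "\<psi> \<in> borel_measurable borel"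
    using borel_measurable_mono mono by blast+
  have B: "0 \<le> B" using bd(1)[of 0] by linarith
  have bound: "\<bar>LINT x|lborel. indicator {a..b} x * \<theta> x * cos (u * x)\<bar> \<le> 6 * B / \<bar>u\<bar>"
    if "mono \<theta>" "\<And>x. \<bar>\<theta> x\<bar> \<le> B" "a \<le> b" "u \<noteq> 0" for \<theta> a b u
  proof -
    have "\<bar>LINT x|lborel. indicator {a..b} x * \<theta> x * cos (u * x)\<bar> \<le>
        (\<bar>\<theta> a\<bar> + (\<theta> b - \<theta> a)) * (2 / \<bar>u\<bar>)"
      by (rule abs_integral_mono_cos_le[OF that(1,3,4)])
    also have "\<dots> \<le> (3 * B) * (2 / \<bar>u\<bar>)"
      using that(2)[of a] that(2)[of b] by (intro mult_right_mono) auto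
    finally show ?thesis by simp
  qed
  have "\<bar>LINT x|lborel. indicator {-R..R} x * g x * cos (u * x)\<bar> \<le> 12 * B / \<bar>u\<bar>"
    if u: "u \<noteq> 0" for R u
  proof (cases "-R \<le> R")
    case True
    have int: "integrable lborel (\<lambda>x. indicator {-R..R} x * (\<theta> x * cos (u * x)))"
      if "\<theta> \<in> borel_measurable borel" "\<And>x. \<bar>\<theta> x\<bar> \<le> B" for \<theta>
      by (rule integrable_indicator_Icc_times_bounded[where K=B])
        (use that in \<open>auto simp: abs_mult intro: order_trans[OF mult_left_le]\<close>)
    have "(LINT x|lborel. indicator {-R..R} x * g x * cos (u * x)) =
        (LINT x|lborel. indicator {-R..R} x * (\<phi> x * cos (u * x)) -
          indicator {-R..R} x * (\<psi> x * cos (u * x)))"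
      by (rule Bochner_Integration.integral_cong) (auto simp: g algebra_simps)
    also have "\<dots> = (LINT x|lborel. indicator {-R..R} x * \<phi> x * cos (u * x)) -
        (LINT x|lborel. indicator {-R..R} x * \<psi> x * cos (u * x))"
      using int[of \<phi>] int[of \<psi>] bd by (simp add: mult.assoc)
    finally show ?thesis
      using bound[OF mono(1) bd(1) True u] bound[OF mono(2) bd(2) True u] by linarith
  qed (use B in simp)
  then show thesis using B by (intro that[of "12 * B"]) auto
qed


section \<open>Lipschitz continuity of the sine transform away from the origin\<close>

lemma tendsto_integral_truncation:
  fixes h :: "real \<Rightarrow> 'a::{banach, second_countable_topology}"
  assumes "integrable M h" and sets: "\<And>n::nat. {-real n..real n} \<in> sets M"
  shows "(\<lambda>n::nat. \<integral>x. indicator {-real n..real n} x *\<^sub>R h x \<partial>M) \<longlonglongrightarrow> integral\<^sup>L M h"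
proof (rule integral_dominated_convergence[where w="\<lambda>x. norm (h x)"])
  have [measurable]: "h \<in> borel_measurable M" using assms(1) by auto
  show "(\<lambda>x. indicator {-real n..real n} x *\<^sub>R h x) \<in> borel_measurable M" for n
    using borel_measurable_indicator[OF sets[of n]] by measurable
  show "AE x in M. (\<lambda>n. indicator {-real n..real n} x *\<^sub>R h x) \<longlonglongrightarrow> h x"
  proof (rule AE_I2)
    fix x :: real
    have "\<forall>\<^sub>F n in sequentially. indicator {-real n..real n} x *\<^sub>R h x = h x"
    proof (rule eventually_sequentiallyI[of "nat \<lceil>\<bar>x\<bar>\<rceil>"])
      fix n assume "nat \<lceil>\<bar>x\<bar>\<rceil> \<le> n"
      then have "\<bar>x\<bar> \<le> real n" by linarith
      then show "indicator {-real n..real n} x *\<^sub>R h x = h x" by (auto simp: indicator_def abs_le_iff)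
    qed
    then show "(\<lambda>n. indicator {-real n..real n} x *\<^sub>R h x) \<longlonglongrightarrow> h x"
      by (rule tendsto_eventually)
  qed
qed (use assms in \<open>auto simp: indicator_def\<close>)

lemma sin_diff_eq_integral_cos:
  fixes x s1 s2 :: real
  assumes "s1 \<le> s2"
  shows "sin (s2 * x) - sin (s1 * x) = (LINT u|lborel. indicator {s1..s2} u * (x * cos (u * x)))"
proof -
  have "(LINT u|lborel. indicator {s1..s2} u *\<^sub>R (x * cos (u * x))) = sin (s2 * x) - sin (s1 * x)"
  proof (rule integral_FTC_atLeastAtMost[OF assms])
    fix u show "((\<lambda>u. sin (u * x)) has_vector_derivative (x * cos (u * x))) (at u within {s1..s2})"
      by (auto intro!: derivative_eq_intros
          simp: has_real_derivative_iff_has_vector_derivative[symmetric])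
  qed (intro continuous_intros)
  then show ?thesis by simp
qed

lemma truncated_sine_integral_diff:
  fixes g :: "real \<Rightarrow> real"
  assumes [measurable]: "g \<in> borel_measurable borel" and bound: "\<And>x. \<bar>g x\<bar> \<le> B"
    and s: "s1 \<le> s2" and g0: "g 0 = 0"
  shows "(LINT x|lborel. indicator {-R..R} x * ((g x / x) * (sin (s2 * x) - sin (s1 * x)))) =
    (LINT u|lborel. indicator {s1..s2} u * (LINT x|lborel. indicator {-R..R} x * g x * cos (u * x)))"
proof -
  define G where "G x u = indicator {-R..R} x * indicator {s1..s2} u * g x * cos (u * x)" for x u
  have gx: "g x / x * x = g x" for x using g0 by (cases "x = 0") auto
  have inner: "indicator {-R..R} x * ((g x / x) * (sin (s2 * x) - sin (s1 * x))) =
      (LINT u|lborel. G x u)" for x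
  proof -
    have "indicator {-R..R} x * ((g x / x) * (sin (s2 * x) - sin (s1 * x))) =
        (LINT u|lborel. (indicator {-R..R} x * (g x / x)) * (indicator {s1..s2} u * (x * cos (u * x))))"
      unfolding sin_diff_eq_integral_cos[OF s, of x] by (simp only: integral_mult_right_zero)
    also have "\<dots> = (LINT u|lborel. G x u)"
    proof (rule Bochner_Integration.integral_cong[OF refl])
      fix u
      have "indicator {-R..R} x * (g x / x) * (indicator {s1..s2} u * (x * cos (u * x))) =
          indicator {-R..R} x * indicator {s1..s2} u * (g x / x * x) * cos (u * x)"
        by (simp only: ac_simps)
      then show "indicator {-R..R} x * (g x / x) * (indicator {s1..s2} u * (x * cos (u * x))) = G x u"
        unfolding G_def gx .
    qed
    finally show ?thesis .
  qed
  have "integrable (lborel \<Otimes>\<^sub>M lborel) (case_prod G)"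
  proof (rule integrable_lborel_pair_vanishing_off_box[where a="-R" and b=R and c=s1 and d=s2 and B=B])
    show "case_prod G \<in> borel_measurable (lborel \<Otimes>\<^sub>M lborel)" unfolding G_def by measurable
    show "\<bar>G x u\<bar> \<le> B" for x u
    proof -
      have "\<bar>g x\<bar> * \<bar>cos (u * x)\<bar> \<le> B"
        using bound[of x] abs_cos_le_one[of "u * x"] by (meson abs_ge_zero mult_left_le order_trans)
      then show ?thesis using bound[of 0] by (auto simp: G_def indicator_def abs_mult)
    qed
  qed (auto simp: G_def indicator_def)
  then have "(LINT x|lborel. LINT u|lborel. G x u) = (LINT u|lborel. LINT x|lborel. G x u)"
    by (rule lborel_pair.Fubini_integral[symmetric])
  also have "\<dots> = (LINT u|lborel. indicator {s1..s2} u *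
      (LINT x|lborel. indicator {-R..R} x * g x * cos (u * x)))"
  proof (rule Bochner_Integration.integral_cong[OF refl])
    fix u
    have "(LINT x|lborel. G x u) =
        (LINT x|lborel. indicator {s1..s2} u * (indicator {-R..R} x * g x * cos (u * x)))"
      unfolding G_def by (rule Bochner_Integration.integral_cong) (auto simp: algebra_simps)
    then show "(LINT x|lborel. G x u) =
        indicator {s1..s2} u * (LINT x|lborel. indicator {-R..R} x * g x * cos (u * x))"
      by simp
  qed
  finally show ?thesis by (simp only: inner)
qed

lemma abs_truncated_sine_integral_diff_le:
  fixes g :: "real \<Rightarrow> real"
  assumes [measurable]: "g \<in> borel_measurable borel" and bound: "\<And>x. \<bar>g x\<bar> \<le> B" and g0: "g 0 = 0"
    and s: "s1 \<le> s2" and \<delta>: "\<delta> > 0" "\<forall>u\<in>{s1..s2}. \<delta> \<le> \<bar>u\<bar>"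
    and C: "C \<ge> 0" "\<And>u. u \<noteq> 0 \<Longrightarrow> \<bar>LINT x|lborel. indicator {-R..R} x * g x * cos (u * x)\<bar> \<le> C / \<bar>u\<bar>"
  shows "\<bar>LINT x|lborel. indicator {-R..R} x * ((g x / x) * (sin (s2 * x) - sin (s1 * x)))\<bar> \<le>
    (s2 - s1) * (C / \<delta>)"
proof -
  have "\<bar>LINT x|lborel. indicator {-R..R} x * ((g x / x) * (sin (s2 * x) - sin (s1 * x)))\<bar> =
      \<bar>LINT u|lborel. indicator {s1..s2} u *
        (LINT x|lborel. indicator {-R..R} x * g x * cos (u * x))\<bar>"
    by (simp only: truncated_sine_integral_diff[OF assms(1) bound s g0])
  also have "\<dots> \<le> (LINT u|lborel. indicator {s1..s2} u * (C / \<delta>))"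
  proof (rule abs_integral_le_integral)
    show "integrable lborel (\<lambda>u. indicator {s1..s2} u * (C / \<delta>))"
      by (rule integrable_indicator_Icc_times_bounded[where K="C / \<delta>"]) (use C \<delta> in auto)
    fix u
    show "\<bar>indicator {s1..s2} u * (LINT x|lborel. indicator {-R..R} x * g x * cos (u * x))\<bar> \<le>
        indicator {s1..s2} u * (C / \<delta>)"
    proof (cases "u \<in> {s1..s2}")
      case True
      then have u: "\<delta> \<le> \<bar>u\<bar>" using \<delta> by auto
      then have "\<bar>LINT x|lborel. indicator {-R..R} x * g x * cos (u * x)\<bar> \<le> C / \<bar>u\<bar>"
        using \<delta> by (intro C) auto
      also have "\<dots> \<le> C / \<delta>" using u \<delta> C by (intro divide_left_mono) auto
      finally show ?thesis using True by simp
    qed simp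
  qed
  also have "\<dots> = (s2 - s1) * (C / \<delta>)" using s by simp
  finally show ?thesis .
qed

lemma sine_transform_lipschitz_off_0:
  fixes g :: "real \<Rightarrow> real"
  assumes bv: "bounded_variation_R g" and g0: "g 0 = 0"
    and int: "integrable lborel (\<lambda>x. g x / x)" and \<delta>: "\<delta> > 0"
  obtains L where "L > 0" "\<And>s1 s2. s1 \<le> s2 \<Longrightarrow> \<forall>u\<in>{s1..s2}. \<delta> \<le> \<bar>u\<bar> \<Longrightarrow>
    \<bar>(LINT x|lborel. g x / x * sin (s2 * x)) - (LINT x|lborel. g x / x * sin (s1 * x))\<bar> \<le> L * (s2 - s1)"
proof -
  obtain C where C: "C \<ge> 0"
    "\<And>R u. u \<noteq> 0 \<Longrightarrow> \<bar>LINT x|lborel. indicator {-R..R} x * g x * cos (u * x)\<bar> \<le> C / \<bar>u\<bar>"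
    using bounded_variation_R_cos_integral_bound[OF bv] by blast
  obtain B where B: "\<And>x. \<bar>g x\<bar> \<le> B" using bounded_variation_R_bounded[OF bv] by blast
  have [measurable]: "g \<in> borel_measurable borel" using bounded_variation_R_borel[OF bv] .
  have int_sin: "integrable lborel (\<lambda>x. g x / x * sin (s * x))" for s
  proof (rule Bochner_Integration.integrable_bound[OF int])
    have "\<bar>g x / x\<bar> * \<bar>sin (s * x)\<bar> \<le> \<bar>g x / x\<bar>" for x
      using abs_sin_le_one[of "s * x"] by (intro mult_right_le_one_le) auto
    then show "AE x in lborel. norm (g x / x * sin (s * x)) \<le> norm (g x / x)"
      by (intro AE_I2) (simp only: real_norm_def abs_mult)
  qed measurable
  have "\<bar>(LINT x|lborel. g x / x * sin (s2 * x)) - (LINT x|lborel. g x / x * sin (s1 * x))\<bar> \<le>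
      (C / \<delta> + 1) * (s2 - s1)" if s: "s1 \<le> s2" "\<forall>u\<in>{s1..s2}. \<delta> \<le> \<bar>u\<bar>" for s1 s2
  proof -
    let ?h = "\<lambda>x. g x / x * (sin (s2 * x) - sin (s1 * x))"
    have "(\<lambda>n::nat. LINT x|lborel. indicator {-real n..real n} x * ?h x) \<longlonglongrightarrow> (LINT x|lborel. ?h x)"
      using tendsto_integral_truncation[of lborel ?h] int_sin[of s2] int_sin[of s1]
      by (simp add: right_diff_distrib)
    moreover have "\<bar>LINT x|lborel. indicator {-real n..real n} x * ?h x\<bar> \<le> (s2 - s1) * (C / \<delta>)" for n
      using abs_truncated_sine_integral_diff_le[OF _ B g0 s(1) \<delta> s(2) C] by simp
    ultimately have "\<bar>LINT x|lborel. ?h x\<bar> \<le> (s2 - s1) * (C / \<delta>)"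
      by (intro LIMSEQ_le_const2[OF tendsto_rabs]) auto
    also have "\<dots> \<le> (C / \<delta> + 1) * (s2 - s1)" using s by (simp add: algebra_simps)
    finally show ?thesis
      using int_sin[of s2] int_sin[of s1] by (simp add: right_diff_distrib)
  qed
  moreover have "C / \<delta> + 1 > 0" using C(1) \<delta> by (simp add: add_nonneg_pos)
  ultimately show thesis by (intro that) auto
qed

section \<open>\<open>ACG\<^sub>*\<close> from Lipschitz bounds off the origin\<close>

lemma osc_le:
  fixes F :: "real \<Rightarrow> real"
  assumes "c \<le> d" and "\<And>x y. x \<in> {c..d} \<Longrightarrow> y \<in> {c..d} \<Longrightarrow> F x - F y \<le> K"
  shows "osc F c d \<le> K"
proof -
  have ne: "{c..d} \<noteq> {}" using assms(1) by auto
  have "(SUP x\<in>{c..d}. F x) \<le> F y + K" if "y \<in> {c..d}" for y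
    using assms(2)[OF _ that] ne by (intro cSUP_least) (auto simp: algebra_simps)
  then have "(SUP x\<in>{c..d}. F x) - K \<le> (INF y\<in>{c..d}. F y)"
    using ne by (intro cINF_greatest) (auto simp: algebra_simps)
  then show ?thesis unfolding osc_def by simp
qed

lemma AC_star_on_if_osc_le:
  assumes \<delta>: "\<delta> > 0" and L: "L > 0"
    and osc: "\<And>c d. c \<in> E \<Longrightarrow> d \<in> E \<Longrightarrow> c \<le> d \<Longrightarrow> d - c < \<delta> \<Longrightarrow> osc F c d \<le> L * (d - c)"
  shows "AC_star_on F E"
  unfolding AC_star_on_def
proof (intro allI impI)
  fix \<epsilon> :: real assume \<epsilon>: "\<epsilon> > 0"
  define \<eta> where "\<eta> = min \<delta> (\<epsilon> / L)"
  have \<eta>: "\<eta> > 0" unfolding \<eta>_def using \<delta> \<epsilon> L by simp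
  have sum_osc: "(\<Sum>k<n. osc F (c k) (d k)) < \<epsilon>"
    if E: "\<forall>k<n. c k \<in> E \<and> d k \<in> E \<and> c k \<le> d k" and small: "(\<Sum>k<n. d k - c k) < \<eta>"
    for n :: nat and c d :: "nat \<Rightarrow> real"
  proof -
    have "d k - c k < \<delta>" if "k < n" for k
    proof -
      have "d k - c k \<le> (\<Sum>k<n. d k - c k)"
        by (rule member_le_sum) (use E that in auto)
      then show ?thesis using small unfolding \<eta>_def by linarith
    qed
    then have "(\<Sum>k<n. osc F (c k) (d k)) \<le> (\<Sum>k<n. L * (d k - c k))"
      using E by (intro sum_mono osc) auto
    also have "\<dots> = L * (\<Sum>k<n. d k - c k)" by (simp add: sum_distrib_left)
    also have "\<dots> < L * \<eta>" using small L by simp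
    also have "\<dots> \<le> \<epsilon>" unfolding \<eta>_def using L by (simp add: min_def field_simps)
    finally show ?thesis .
  qed
  show "\<exists>\<eta>>0. \<forall>(n::nat) c d. (\<forall>k<n. c k \<in> E \<and> d k \<in> E \<and> c k \<le> d k) \<and>
      (\<forall>i<n. \<forall>j<n. i \<noteq> j \<longrightarrow> d i \<le> c j \<or> d j \<le> c i) \<and> (\<Sum>k<n. d k - c k) < \<eta> \<longrightarrow>
      (\<Sum>k<n. osc F (c k) (d k)) < \<epsilon>"
  proof (intro exI[of _ \<eta>] conjI allI impI \<eta>)
    fix n :: nat and c d :: "nat \<Rightarrow> real"
    assume "(\<forall>k<n. c k \<in> E \<and> d k \<in> E \<and> c k \<le> d k) \<and>
      (\<forall>i<n. \<forall>j<n. i \<noteq> j \<longrightarrow> d i \<le> c j \<or> d j \<le> c i) \<and> (\<Sum>k<n. d k - c k) < \<eta>"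
    then show "(\<Sum>k<n. osc F (c k) (d k)) < \<epsilon>" by (intro sum_osc) auto
  qed
qed

lemma UN_abs_ge_inverse_Suc: "(\<Union>n. insert 0 {s::real. 1 / (real n + 1) \<le> \<bar>s\<bar>}) = UNIV"
proof -
  have "\<exists>n. 1 / (real n + 1) \<le> \<bar>s\<bar>" if "s \<noteq> 0" for s :: real
  proof -
    have "\<bar>s\<bar> > 0" using that by simp
    then obtain n :: nat where "inverse (real (Suc n)) < \<bar>s\<bar>"
      using reals_Archimedean by blast
    then show ?thesis by (intro exI[of _ n]) (simp add: inverse_eq_divide add.commute)
  qed
  then show ?thesis by auto
qed

text \<open>\<open>F\<close> is \<open>AC\<^sub>*\<close> on each set \<open>{0} \<union> {\<bar>s\<bar> \<ge> 1/(n+1)}\<close>: a short interval with end points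
  there either is degenerate or stays away from the origin.\<close>

lemma ACG_star_if_lipschitz_off_0:
  fixes F :: "real \<Rightarrow> real"
  assumes cont: "continuous_on UNIV F"
    and lip: "\<And>\<delta>. \<delta> > 0 \<Longrightarrow> \<exists>L>0. \<forall>s1 s2. s1 \<le> s2 \<longrightarrow> (\<forall>u\<in>{s1..s2}. \<delta> \<le> \<bar>u\<bar>) \<longrightarrow>
      \<bar>F s2 - F s1\<bar> \<le> L * (s2 - s1)"
  shows "ACG_star F"
  unfolding ACG_star_def
proof (intro conjI cont exI[of _ "\<lambda>n. insert 0 {s. 1 / (real n + 1) \<le> \<bar>s\<bar>}"] allI
    UN_abs_ge_inverse_Suc)
  fix n :: nat
  define \<delta> where "\<delta> = 1 / (real n + 1)"
  have \<delta>: "\<delta> > 0" unfolding \<delta>_def by simp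
  obtain L where L: "L > 0" "\<And>s1 s2. s1 \<le> s2 \<Longrightarrow> \<forall>u\<in>{s1..s2}. \<delta> \<le> \<bar>u\<bar> \<Longrightarrow>
      \<bar>F s2 - F s1\<bar> \<le> L * (s2 - s1)"
    using lip[OF \<delta>] by blast
  show "AC_star_on F (insert 0 {s. 1 / (real n + 1) \<le> \<bar>s\<bar>})"
  proof (rule AC_star_on_if_osc_le[OF \<delta> L(1)])
    fix c d assume cd: "c \<in> insert 0 {s. 1 / (real n + 1) \<le> \<bar>s\<bar>}" "d \<in> insert 0 {s. 1 / (real n + 1) \<le> \<bar>s\<bar>}"
      "c \<le> d" "d - c < \<delta>"
    show "osc F c d \<le> L * (d - c)"
    proof (cases "c = d")
      case True
      then show ?thesis by (simp add: osc_def)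
    next
      case False
      then have "\<delta> \<le> c \<or> d \<le> -\<delta>" using cd \<delta> unfolding \<delta>_def by auto
      then have away: "\<forall>u\<in>{x..y}. \<delta> \<le> \<bar>u\<bar>" if "x \<in> {c..d}" "y \<in> {c..d}" for x y
        using that by auto
      have bound: "\<bar>F y - F x\<bar> \<le> L * (d - c)" if "x \<in> {c..d}" "y \<in> {c..d}" "x \<le> y" for x y
      proof -
        have "L * (y - x) \<le> L * (d - c)" using that L(1) by (intro mult_left_mono) auto
        then show ?thesis using L(2)[OF that(3) away[OF that(1,2)]] by linarith
      qed
      show ?thesis
      proof (rule osc_le[OF cd(3)])
        fix x y assume "x \<in> {c..d}" "y \<in> {c..d}"
        then show "F x - F y \<le> L * (d - c)"
          using bound[of x y] bound[of y x] by (cases "x \<le> y") (auto simp: abs_le_iff)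
      qed
    qed
  qed
qed


section \<open>The sine part of the \<open>L\<^sup>1\<close> Fourier transform\<close>

lemma borel_measurable_cis_mult[measurable]: "(\<lambda>x::real. cis (a * x)) \<in> borel_measurable borel"
  by (intro borel_measurable_continuous_onI continuous_intros)

lemma lebesgue_measurable_cis_mult[measurable]: "(\<lambda>x::real. cis (a * x)) \<in> borel_measurable lebesgue"
  using borel_measurable_cis_mult[of a]
  by (metis measurable_completion measurable_lborel2)

lemma integrable_fourier1_integrand:
  assumes "integrable lebesgue h"
  shows "integrable lebesgue (\<lambda>x. cis (- s * x) * complex_of_real (h x))"
proof (rule Bochner_Integration.integrable_bound[where f="\<lambda>x. h x"])
  have [measurable]: "h \<in> borel_measurable lebesgue" using assms by auto
  show "(\<lambda>x. cis (- s * x) * complex_of_real (h x)) \<in> borel_measurable lebesgue" by measurable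
qed (use assms in \<open>auto simp: norm_mult\<close>)

lemma continuous_on_fourier1:
  assumes "integrable lebesgue h"
  shows "continuous_on UNIV (fourier1 h)"
proof -
  have [measurable]: "h \<in> borel_measurable lebesgue" using assms by auto
  have "continuous_on UNIV (\<lambda>s. LINT x|lebesgue. cis (- s * x) * complex_of_real (h x))"
  proof (rule continuous_on_sequentiallyI)
    fix u :: "nat \<Rightarrow> real" and a assume u: "u \<longlonglongrightarrow> a"
    show "(\<lambda>n. LINT x|lebesgue. cis (- u n * x) * complex_of_real (h x)) \<longlonglongrightarrow>
        (LINT x|lebesgue. cis (- a * x) * complex_of_real (h x))"
    proof (rule integral_dominated_convergence[where w="\<lambda>x. norm (h x)"])
      show "AE x in lebesgue. (\<lambda>n. cis (- u n * x) * complex_of_real (h x)) \<longlonglongrightarrow>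
          cis (- a * x) * complex_of_real (h x)"
        using u by (intro AE_I2 tendsto_intros continuous_on_tendsto_compose[OF continuous_on_cis]) auto
      show "(\<lambda>x. cis (- a * x) * complex_of_real (h x)) \<in> borel_measurable lebesgue" by measurable
      show "(\<lambda>x. cis (- u n * x) * complex_of_real (h x)) \<in> borel_measurable lebesgue" for n
        by measurable
    qed (use assms in \<open>auto simp: norm_mult\<close>)
  qed
  then show ?thesis unfolding fourier1_def[abs_def] by (intro continuous_intros) auto
qed

lemma minus_Im_fourier1:
  assumes "integrable lebesgue h"
  shows "- Im (fourier1 h s) = (LINT x|lebesgue. h x * sin (s * x)) / sqrt (2 * pi)"
proof -
  have "Im (LINT x|lebesgue. cis (- s * x) * complex_of_real (h x)) =
      (LINT x|lebesgue. Im (cis (- s * x) * complex_of_real (h x)))"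
    by (rule integral_bounded_linear[OF bounded_linear_Im integrable_fourier1_integrand[OF assms],
          symmetric])
  also have "\<dots> = (LINT x|lebesgue. - (h x * sin (s * x)))"
    by (rule Bochner_Integration.integral_cong) (auto simp: cis.sel)
  finally show ?thesis unfolding fourier1_def by (simp add: Im_divide_of_real)
qed

lemma fourier1_add:
  assumes "integrable lebesgue f1" "integrable lebesgue f2"
  shows "fourier1 (\<lambda>x. f1 x + f2 x) s = fourier1 f1 s + fourier1 f2 s"
proof -
  have "(LINT x|lebesgue. cis (- s * x) * complex_of_real (f1 x + f2 x)) =
      (LINT x|lebesgue. cis (- s * x) * complex_of_real (f1 x) + cis (- s * x) * complex_of_real (f2 x))"
    by (simp add: distrib_left)
  also have "\<dots> = (LINT x|lebesgue. cis (- s * x) * complex_of_real (f1 x)) +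
      (LINT x|lebesgue. cis (- s * x) * complex_of_real (f2 x))"
    using integrable_fourier1_integrand[OF assms(1)] integrable_fourier1_integrand[OF assms(2)]
    by (rule Bochner_Integration.integral_add)
  finally show ?thesis unfolding fourier1_def by (simp add: add_divide_distrib)
qed

lemma sets_lebesgue_Icc: "{a..b::real} \<in> sets lebesgue"
  by (rule sets_completionI_sets) simp

lemma tendsto_fourier1_truncation:
  assumes "integrable lebesgue h"
  shows "(\<lambda>n::nat. fourier1 (\<lambda>x. indicator {-real n..real n} x * h x) s) \<longlonglongrightarrow> fourier1 h s"
proof -
  have "cis (- s * x) * complex_of_real (indicator {-real n..real n} x * h x) =
      indicator {-real n..real n} x *\<^sub>R (cis (- s * x) * complex_of_real (h x))" for n :: nat and x
    by (simp add: indicator_def)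
  then have "(\<lambda>n::nat. LINT x|lebesgue. cis (- s * x) * complex_of_real (indicator {-real n..real n} x * h x))
      \<longlonglongrightarrow> (LINT x|lebesgue. cis (- s * x) * complex_of_real (h x))"
    using tendsto_integral_truncation[OF integrable_fourier1_integrand[OF assms] sets_lebesgue_Icc]
    by simp
  then show ?thesis unfolding fourier1_def by (intro tendsto_intros) auto
qed

lemma le_powr_plus_inverse_1_plus_square:
  fixes a x p :: real
  assumes p: "1 \<le> p" and x: "\<bar>x\<bar> \<le> 1" and a: "0 \<le> a"
  shows "a \<le> a powr p + 2 * inverse (1 + x\<^sup>2)"
proof -
  have "x\<^sup>2 \<le> 1" using x by (simp add: abs_square_le_1)
  then have one: "1 \<le> 2 * inverse (1 + x\<^sup>2)"
    by (simp add: field_simps add_pos_nonneg)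
  show ?thesis
  proof (cases "a \<le> 1")
    case True then show ?thesis using one powr_ge_zero[of a p] by linarith
  next
    case False
    then have "a powr 1 \<le> a powr p" using p by (intro powr_mono) auto
    then show ?thesis using False one by simp
  qed
qed

text \<open>The case \<open>p \<le> 2\<close> is needed here: for \<open>a < 1\<close> we use \<open>a \<le> a powr (p - 1)\<close>.\<close>

lemma divide_abs_le_powr_plus_inverse_1_plus_square:
  fixes a x p :: real
  assumes p: "1 \<le> p" "p \<le> 2" and x: "1 < \<bar>x\<bar>" and a: "0 \<le> a"
  shows "a / \<bar>x\<bar> \<le> a powr p + 2 * inverse (1 + x\<^sup>2)"
proof -
  have x2: "1 < x\<^sup>2" using one_less_power[OF x, of 2] by simp
  have pos: "0 \<le> a powr p" "0 \<le> 2 * inverse (1 + x\<^sup>2)" by (auto simp: add_pos_nonneg)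
  show ?thesis
  proof (cases "a \<le> inverse \<bar>x\<bar>")
    case True
    then have "a / \<bar>x\<bar> \<le> inverse \<bar>x\<bar> / \<bar>x\<bar>" using x by (intro divide_right_mono) auto
    also have "\<dots> = inverse (x\<^sup>2)" by (simp add: power2_eq_square field_simps)
    also have "\<dots> \<le> 2 * inverse (1 + x\<^sup>2)"
    proof -
      have "0 < x\<^sup>2" using x2 by linarith
      then show ?thesis using x2 by (simp add: field_simps)
    qed
    finally show ?thesis using pos by linarith
  next
    case False
    then have a_gt: "inverse \<bar>x\<bar> < a" by simp
    moreover have "0 < inverse \<bar>x\<bar>" using x by simp
    ultimately have a_pos: "0 < a" by linarith
    have "inverse \<bar>x\<bar> \<le> a powr (p - 1)"
    proof (cases "1 \<le> a")
      case True
      then have "1 \<le> a powr (p - 1)" using p by (intro ge_one_powr_ge_zero) auto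
      moreover have "inverse \<bar>x\<bar> \<le> 1" using x by (simp add: inverse_le_1_iff)
      ultimately show ?thesis by linarith
    next
      case False
      then have "a powr 1 \<le> a powr (p - 1)" using p a_pos by (intro powr_mono') auto
      then show ?thesis using a_gt a_pos by simp
    qed
    then have "a * inverse \<bar>x\<bar> \<le> a * a powr (p - 1)" using a_pos by (intro mult_left_mono) auto
    also have "a * a powr (p - 1) = a powr p" using a_pos by (simp add: powr_diff field_simps)
    finally have "a / \<bar>x\<bar> \<le> a powr p" by (simp add: divide_inverse)
    then show ?thesis using pos(2) by linarith
  qed
qed

lemma integrable_inverse_1_plus_square_lebesgue:
  "integrable lebesgue (\<lambda>x::real. inverse (1 + x\<^sup>2))"
proof -
  have "integrable lborel (\<lambda>x::real. inverse (1 + x\<^sup>2))"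
    using integrable_inverse_1_plus_square unfolding set_integrable_def by (simp add: einterval_def)
  then show ?thesis by (subst integrable_completion) auto
qed

text \<open>Pointwise, \<open>\<bar>f t\<bar> \<le> \<bar>f t\<bar> powr p + \<bar>t f t\<bar> powr p + 2 / (1 + t\<^sup>2)\<close>.\<close>

lemma integrable_if_Lp_real_weighted:
  fixes f :: "real \<Rightarrow> real"
  assumes p: "1 \<le> p" "p \<le> 2" and f: "Lp_real p f" and tf: "Lp_real p (\<lambda>t. t * f t)"
  shows "integrable lebesgue f"
proof (rule Bochner_Integration.integrable_bound)
  define b where "b x = \<bar>f x\<bar> powr p + \<bar>x * f x\<bar> powr p + 2 * inverse (1 + x\<^sup>2)" for x
  show "integrable lebesgue b"
    unfolding b_def using f tf integrable_inverse_1_plus_square_lebesgue unfolding Lp_real_def by auto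
  show "f \<in> borel_measurable lebesgue" using f unfolding Lp_real_def by auto
  have "\<bar>f x\<bar> \<le> b x" for x
  proof (cases "\<bar>x\<bar> \<le> 1")
    case True
    then show ?thesis
      using le_powr_plus_inverse_1_plus_square[OF p(1) True, of "\<bar>f x\<bar>"]
        powr_ge_zero[of "\<bar>x * f x\<bar>" p] unfolding b_def by linarith
  next
    case False
    then have "\<bar>f x\<bar> = \<bar>x * f x\<bar> / \<bar>x\<bar>" by (simp add: abs_mult)
    then show ?thesis
      using divide_abs_le_powr_plus_inverse_1_plus_square[OF p, of x "\<bar>x * f x\<bar>"] False
        powr_ge_zero[of "\<bar>f x\<bar>" p] unfolding b_def by linarith
  qed
  then show "AE x in lebesgue. norm (f x) \<le> norm (b x)"
    by (intro AE_I2) (auto intro: order_trans[OF _ abs_ge_self])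
qed

text \<open>Replacing \<open>f\<close> by \<open>t f t / t\<close> (equal except at \<open>0\<close>) gives a Borel representative, which
  lets the sine transform be handled on \<open>lborel\<close>.\<close>

lemma AE_eq_times_divide:
  fixes f :: "real \<Rightarrow> real"
  shows "AE x in lebesgue. f x = x * f x / x"
proof (rule AE_completion)
  show "AE x in lborel. f x = x * f x / x"
    using AE_lborel_singleton[of 0] by eventually_elim simp
qed

lemma integrable_lborel_times_divide:
  fixes f :: "real \<Rightarrow> real"
  assumes "integrable lebesgue f" and [measurable]: "(\<lambda>t. t * f t) \<in> borel_measurable borel"
  shows "integrable lborel (\<lambda>x. x * f x / x)"
proof -
  have m: "(\<lambda>x. x * f x / x) \<in> borel_measurable borel" by measurable
  have "integrable lebesgue (\<lambda>x. x * f x / x)"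
    by (rule integrable_cong_AE_imp[OF assms(1) _ AE_eq_times_divide])
      (use m in \<open>auto intro: measurable_completion\<close>)
  then show ?thesis by (subst (asm) integrable_completion) (use m in auto)
qed

lemma integral_sin_eq_lborel_times_divide:
  fixes f :: "real \<Rightarrow> real"
  assumes "integrable lebesgue f" and [measurable]: "(\<lambda>t. t * f t) \<in> borel_measurable borel"
  shows "(LINT x|lebesgue. f x * sin (s * x)) = (LINT x|lborel. x * f x / x * sin (s * x))"
proof -
  have [measurable]: "f \<in> borel_measurable lebesgue" using assms(1) by auto
  have sin: "(\<lambda>x::real. sin (s * x)) \<in> borel_measurable borel"
    by (intro borel_measurable_continuous_onI continuous_intros)
  then have [measurable]: "(\<lambda>x::real. sin (s * x)) \<in> borel_measurable lebesgue"
    by (auto intro: measurable_completion)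
  have m: "(\<lambda>x. x * f x / x * sin (s * x)) \<in> borel_measurable borel"
    using sin by measurable
  have "(LINT x|lebesgue. f x * sin (s * x)) = (LINT x|lebesgue. x * f x / x * sin (s * x))"
  proof (rule integral_cong_AE)
    show "AE x in lebesgue. f x * sin (s * x) = x * f x / x * sin (s * x)"
      using AE_eq_times_divide[of f] by eventually_elim simp
    show "(\<lambda>x. x * f x / x * sin (s * x)) \<in> borel_measurable lebesgue"
      using m by (auto intro: measurable_completion)
  qed measurable
  also have "\<dots> = (LINT x|lborel. x * f x / x * sin (s * x))"
    by (rule integral_completion) (use m in auto)
  finally show ?thesis .
qed

lemma ACG_star_minus_Im_fourier1:
  fixes f :: "real \<Rightarrow> real"
  assumes int: "integrable lebesgue f" and bv: "bounded_variation_R (\<lambda>t. t * f t)"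
  shows "ACG_star (\<lambda>s. - Im (fourier1 f s))"
proof (rule ACG_star_if_lipschitz_off_0)
  show "continuous_on UNIV (\<lambda>s. - Im (fourier1 f s))"
    using continuous_on_fourier1[OF int] by (intro continuous_intros) auto
  have [measurable]: "(\<lambda>t. t * f t) \<in> borel_measurable borel" using bounded_variation_R_borel[OF bv] .
  have eq: "- Im (fourier1 f s) = (LINT x|lborel. x * f x / x * sin (s * x)) / sqrt (2 * pi)" for s
    using minus_Im_fourier1[OF int, of s] integral_sin_eq_lborel_times_divide[OF int, of s] by simp
  have sqrt: "1 \<le> sqrt (2 * pi)" using pi_gt3 by (simp add: real_le_rsqrt)
  fix \<delta> :: real assume \<delta>: "\<delta> > 0"
  obtain L where L: "L > 0" "\<And>s1 s2. s1 \<le> s2 \<Longrightarrow> \<forall>u\<in>{s1..s2}. \<delta> \<le> \<bar>u\<bar> \<Longrightarrow>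
      \<bar>(LINT x|lborel. x * f x / x * sin (s2 * x)) - (LINT x|lborel. x * f x / x * sin (s1 * x))\<bar> \<le>
        L * (s2 - s1)"
    using sine_transform_lipschitz_off_0[OF bv _ integrable_lborel_times_divide[OF int] \<delta>] by auto
  have "\<bar>- Im (fourier1 f s2) - - Im (fourier1 f s1)\<bar> \<le> L * (s2 - s1)"
    if "s1 \<le> s2" "\<forall>u\<in>{s1..s2}. \<delta> \<le> \<bar>u\<bar>" for s1 s2
  proof -
    let ?A = "(LINT x|lborel. x * f x / x * sin (s2 * x)) - (LINT x|lborel. x * f x / x * sin (s1 * x))"
    have "\<bar>- Im (fourier1 f s2) - - Im (fourier1 f s1)\<bar> = \<bar>?A\<bar> / sqrt (2 * pi)"
      unfolding eq by (simp add: diff_divide_distrib[symmetric] abs_div)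
    also have "\<dots> \<le> \<bar>?A\<bar>"
      using sqrt by (simp add: divide_le_eq mult_le_cancel_left1)
    also have "\<dots> \<le> L * (s2 - s1)" using L(2)[OF that] .
    finally show ?thesis .
  qed
  then show "\<exists>L>0. \<forall>s1 s2. s1 \<le> s2 \<longrightarrow> (\<forall>u\<in>{s1..s2}. \<delta> \<le> \<bar>u\<bar>) \<longrightarrow>
      \<bar>- Im (fourier1 f s2) - - Im (fourier1 f s1)\<bar> \<le> L * (s2 - s1)"
    using L(1) by blast
qed


section \<open>Compatibility of the Plancherel transform with the \<open>L\<^sup>1\<close> transform\<close>

lemma integral_indicator_sin:
  fixes u a b :: real
  assumes "a \<le> b" "u \<noteq> 0"
  shows "(LINT x|lborel. indicator {a..b} x * sin (u * x)) = (cos (u * a) - cos (u * b)) / u"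
proof -
  have "(LINT x|lborel. indicator {a..b} x *\<^sub>R sin (u * x)) = - cos (u * b) / u - - cos (u * a) / u"
  proof (rule integral_FTC_atLeastAtMost[OF assms(1)])
    fix x show "((\<lambda>x. - cos (u * x) / u) has_vector_derivative sin (u * x)) (at x within {a..b})"
      using assms(2) by (auto intro!: derivative_eq_intros
          simp: has_real_derivative_iff_has_vector_derivative[symmetric])
  qed (intro continuous_intros)
  then show ?thesis by (simp add: diff_divide_distrib)
qed

lemma integral_indicator_cis:
  fixes u a b :: real
  shows "(LINT x|lborel. indicator {a..b} x * cis (u * x)) =
    complex_of_real (LINT x|lborel. indicator {a..b} x * cos (u * x)) +
    \<i> * complex_of_real (LINT x|lborel. indicator {a..b} x * sin (u * x))"
proof -
  have int_cos: "integrable lborel (\<lambda>x. indicator {a..b} x * cos (u * x))"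
    by (rule integrable_indicator_Icc_times_bounded[where K=1]) auto
  have int_sin: "integrable lborel (\<lambda>x. indicator {a..b} x * sin (u * x))"
    by (rule integrable_indicator_Icc_times_bounded[where K=1]) auto
  have "(LINT x|lborel. indicator {a..b} x * cis (u * x)) =
      (LINT x|lborel. complex_of_real (indicator {a..b} x * cos (u * x)) +
        \<i> * complex_of_real (indicator {a..b} x * sin (u * x)))"
    by (rule Bochner_Integration.integral_cong) (auto simp: cis.code Complex_eq indicator_def)
  also have "\<dots> = (LINT x|lborel. complex_of_real (indicator {a..b} x * cos (u * x))) +
      (LINT x|lborel. \<i> * complex_of_real (indicator {a..b} x * sin (u * x)))"
    using integrable_of_real[OF int_cos] integrable_mult_right[OF integrable_of_real[OF int_sin], of \<i>]
    by (rule Bochner_Integration.integral_add)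
  also have "\<dots> = complex_of_real (LINT x|lborel. indicator {a..b} x * cos (u * x)) +
      \<i> * complex_of_real (LINT x|lborel. indicator {a..b} x * sin (u * x))"
    by (simp only: integral_mult_right_zero integral_complex_of_real)
  finally show ?thesis .
qed

lemma integral_indicator_cis_orthogonal:
  fixes T :: real and m :: int
  assumes T: "T > 0"
  shows "(LINT x|lebesgue. indicator {-T..T} x * cis (of_int m * (pi / T) * x)) =
    (if m = 0 then complex_of_real (2 * T) else 0)"
proof -
  have "(LINT x|lebesgue. indicator {-T..T} x * cis (of_int m * (pi / T) * x)) =
      (LINT x|lborel. indicator {-T..T} x * cis (of_int m * (pi / T) * x))"
    by (rule integral_completion) measurable
  also have "\<dots> = (if m = 0 then complex_of_real (2 * T) else 0)"
  proof (cases "m = 0")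
    case True
    then have "(LINT x|lborel. indicator {-T..T} x * cis (of_int m * (pi / T) * x)) =
        (LINT x|lborel. complex_of_real (indicator {-T..T} x))"
      by (intro Bochner_Integration.integral_cong) (auto simp: indicator_def)
    then show ?thesis using True T by simp
  next
    case False
    define u where "u = of_int m * (pi / T)"
    have u: "u \<noteq> 0" using False T unfolding u_def by simp
    have "u * T = pi * of_int m" unfolding u_def using T by simp
    then have "(LINT x|lborel. indicator {-T..T} x * cos (u * x)) = 0"
      using integral_indicator_cos[of "-T" T u] T u by simp
    moreover have "(LINT x|lborel. indicator {-T..T} x * sin (u * x)) = 0"
      using integral_indicator_sin[of "-T" T u] T u by simp
    ultimately show ?thesis using integral_indicator_cis[of "-T" T u] False unfolding u_def by simp
  qed
  finally show ?thesis .
qed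

lemma borel_measurable_cnj[measurable]:
  fixes f :: "'a \<Rightarrow> complex"
  assumes [measurable]: "f \<in> borel_measurable M"
  shows "(\<lambda>x. cnj (f x)) \<in> borel_measurable M"
proof -
  have "(\<lambda>x. cnj (f x)) = (\<lambda>x. complex_of_real (Re (f x)) - \<i> * complex_of_real (Im (f x)))"
    by (auto simp: complex_eq_iff)
  then show ?thesis by simp
qed

lemma of_real_norm_sum_square:
  fixes c e :: "'i \<Rightarrow> complex"
  shows "complex_of_real ((cmod (\<Sum>k\<in>J. c k * e k))\<^sup>2) =
    (\<Sum>j\<in>J. \<Sum>k\<in>J. c j * cnj (c k) * (e j * cnj (e k)))"
  unfolding complex_norm_square
  by (simp add: sum_distrib_left sum_distrib_right algebra_simps) (rule sum.swap)

lemma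
  fixes c :: "int \<Rightarrow> complex" and T \<sigma> :: real
  assumes T: "T > 0" and J: "finite J"
  defines "\<Phi> x \<equiv> \<Sum>k\<in>J. c k * cis ((\<sigma> + of_int k * (pi / T)) * x)"
  shows integrable_indicator_norm_square_trig_sum:
      "integrable lebesgue (\<lambda>x. indicator {-T..T} x * (cmod (\<Phi> x))\<^sup>2)"
    and integral_indicator_norm_square_trig_sum:
      "(LINT x|lebesgue. indicator {-T..T} x * (cmod (\<Phi> x))\<^sup>2) = 2 * T * (\<Sum>k\<in>J. (cmod (c k))\<^sup>2)"
proof -
  define e where "e k x = cis ((\<sigma> + of_int k * (pi / T)) * x)" for k :: int and x :: real
  define I where "I x = (indicator {-T..T} x :: real)" for x
  have [measurable]: "I \<in> borel_measurable lebesgue"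
    unfolding I_def[abs_def] by (rule borel_measurable_indicator[OF sets_lebesgue_Icc])
  have e_cnj_e: "e j x * cnj (e k x) = cis (of_int (j - k) * (pi / T) * x)" for j k x
    unfolding e_def by (simp add: cis_cnj cis_mult algebra_simps)
  have int_term: "integrable lebesgue (\<lambda>x. complex_of_real (I x) * (e j x * cnj (e k x)))" for j k
  proof (rule integrableI_bounded_set[where A="{-T..T}" and B=1])
    show "emeasure lebesgue {-T..T} < \<infinity>" using T by (simp add: emeasure_lborel_Icc_eq)
    show "(\<lambda>x. complex_of_real (I x) * (e j x * cnj (e k x))) \<in> borel_measurable lebesgue"
      unfolding e_def by measurable
  qed (auto simp: I_def norm_mult e_def)
  have integral_term: "(LINT x|lebesgue. complex_of_real (I x) * (e j x * cnj (e k x))) =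
      (if j = k then complex_of_real (2 * T) else 0)" for j k
  proof -
    have "(LINT x|lebesgue. complex_of_real (I x) * (e j x * cnj (e k x))) =
        (LINT x|lebesgue. indicator {-T..T} x * cis (of_int (j - k) * (pi / T) * x))"
      by (intro Bochner_Integration.integral_cong) (auto simp: e_cnj_e I_def indicator_def)
    then show ?thesis using integral_indicator_cis_orthogonal[OF T, of "j - k"] by simp
  qed
  have expand: "(\<lambda>x. complex_of_real (I x * (cmod (\<Phi> x))\<^sup>2)) =
      (\<lambda>x. \<Sum>j\<in>J. \<Sum>k\<in>J. c j * cnj (c k) * (complex_of_real (I x) * (e j x * cnj (e k x))))"
    unfolding \<Phi>_def e_def[symmetric] of_real_mult of_real_norm_sum_square
    by (simp add: sum_distrib_left algebra_simps)
  have "integrable lebesgue (\<lambda>x. complex_of_real (I x * (cmod (\<Phi> x))\<^sup>2))"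
    unfolding expand using int_term by simp
  from integrable_Re[OF this] show int: "integrable lebesgue (\<lambda>x. indicator {-T..T} x * (cmod (\<Phi> x))\<^sup>2)"
    by (simp add: I_def)
  have "complex_of_real (LINT x|lebesgue. I x * (cmod (\<Phi> x))\<^sup>2) =
      (\<Sum>j\<in>J. \<Sum>k\<in>J. c j * cnj (c k) * (LINT x|lebesgue. complex_of_real (I x) * (e j x * cnj (e k x))))"
    unfolding integral_complex_of_real[symmetric] expand using int_term
    by (simp add: Bochner_Integration.integral_sum integrable_sum)
  also have "\<dots> = (\<Sum>j\<in>J. c j * cnj (c j) * complex_of_real (2 * T))"
    unfolding integral_term using J by (simp add: if_distrib sum.delta cong: if_cong)
  also have "\<dots> = complex_of_real (2 * T * (\<Sum>k\<in>J. (cmod (c k))\<^sup>2))"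
    by (simp add: complex_norm_square[symmetric] sum_distrib_left mult.commute)
  finally show "(LINT x|lebesgue. indicator {-T..T} x * (cmod (\<Phi> x))\<^sup>2) = 2 * T * (\<Sum>k\<in>J. (cmod (c k))\<^sup>2)"
    unfolding I_def of_real_eq_iff .
qed


text \<open>Bessel's inequality for the exponentials \<open>e\<^sub>k x = cis ((\<sigma> + k \<pi> / T) x)\<close>, orthogonal on
  \<open>[-T, T]\<close>: for \<open>\<Phi> = \<Sum>\<^sub>k c\<^sub>k e\<^sub>k\<close> with \<open>c\<^sub>k = \<integral> h e\<^sub>k\<^sup>*\<close> and \<open>S = \<Sum>\<^sub>k \<bar>c\<^sub>k\<bar>\<^sup>2\<close>,
  \<open>S = Re \<integral> h \<Phi>\<^sup>* \<le> T \<integral> h\<^sup>2 + \<integral>\<^bsub>[-T,T]\<^esub> \<bar>\<Phi>\<bar>\<^sup>2 / (4 T) = T \<integral> h\<^sup>2 + S / 2\<close>.\<close>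

lemma bessel_inequality_cis:
  fixes h :: "real \<Rightarrow> real" and T \<sigma> :: real and J :: "int set"
  assumes T: "T > 0" and hi: "integrable lebesgue h" and h2: "integrable lebesgue (\<lambda>x. (h x)\<^sup>2)"
    and supp: "\<And>x. x \<notin> {-T..T} \<Longrightarrow> h x = 0" and J: "finite J"
  shows "(\<Sum>k\<in>J. (cmod (LINT x|lebesgue. complex_of_real (h x) *
      cis (- ((\<sigma> + of_int k * (pi / T)) * x))))\<^sup>2) \<le> 2 * T * (LINT x|lebesgue. (h x)\<^sup>2)"
proof -
  have [measurable]: "h \<in> borel_measurable lebesgue" using hi by auto
  define e where "e k x = cis ((\<sigma> + of_int k * (pi / T)) * x)" for k :: int and x :: real
  define c where "c k = (LINT x|lebesgue. complex_of_real (h x) * cnj (e k x))" for k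
  define S where "S = (\<Sum>k\<in>J. (cmod (c k))\<^sup>2)"
  define \<Phi> where "\<Phi> x = (\<Sum>k\<in>J. c k * e k x)" for x
  have int_term: "integrable lebesgue (\<lambda>x. complex_of_real (h x) * cnj (e k x))" for k
  proof (rule Bochner_Integration.integrable_bound[OF hi])
    show "(\<lambda>x. complex_of_real (h x) * cnj (e k x)) \<in> borel_measurable lebesgue"
      unfolding e_def by measurable
  qed (auto simp: norm_mult e_def)
  have int_h\<Phi>: "integrable lebesgue (\<lambda>x. complex_of_real (h x) * cnj (\<Phi> x))"
    unfolding \<Phi>_def using int_term by (simp add: sum_distrib_left algebra_simps integrable_sum)
  have int_\<Phi>: "integrable lebesgue (\<lambda>x. indicator {-T..T} x * (cmod (\<Phi> x))\<^sup>2)"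
    and integral_\<Phi>: "(LINT x|lebesgue. indicator {-T..T} x * (cmod (\<Phi> x))\<^sup>2) = 2 * T * S"
    using integrable_indicator_norm_square_trig_sum[OF T J, of c \<sigma>]
      integral_indicator_norm_square_trig_sum[OF T J, of c \<sigma>]
    unfolding \<Phi>_def e_def S_def by auto
  have "(LINT x|lebesgue. complex_of_real (h x) * cnj (\<Phi> x)) =
      (\<Sum>k\<in>J. cnj (c k) * (LINT x|lebesgue. complex_of_real (h x) * cnj (e k x)))"
    unfolding \<Phi>_def using int_term
    by (simp add: sum_distrib_left algebra_simps Bochner_Integration.integral_sum)
  also have "\<dots> = complex_of_real S"
    unfolding S_def c_def[symmetric] of_real_sum complex_norm_square by (simp add: mult.commute)
  finally have "S = (LINT x|lebesgue. Re (complex_of_real (h x) * cnj (\<Phi> x)))"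
    using integral_bounded_linear[OF bounded_linear_Re int_h\<Phi>] by simp
  also have "\<dots> \<le> (LINT x|lebesgue. T * (h x)\<^sup>2 + indicator {-T..T} x * (cmod (\<Phi> x))\<^sup>2 / (4 * T))"
  proof (rule integral_mono)
    show "Re (complex_of_real (h x) * cnj (\<Phi> x)) \<le>
        T * (h x)\<^sup>2 + indicator {-T..T} x * (cmod (\<Phi> x))\<^sup>2 / (4 * T)" for x
    proof (cases "x \<in> {-T..T}")
      case True
      have "0 \<le> (2 * T * \<bar>h x\<bar> - cmod (\<Phi> x))\<^sup>2" by simp
      then have "\<bar>h x\<bar> * cmod (\<Phi> x) \<le> T * (h x)\<^sup>2 + (cmod (\<Phi> x))\<^sup>2 / (4 * T)"
        using T by (simp add: power2_eq_square field_simps)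
      moreover have "Re (complex_of_real (h x) * cnj (\<Phi> x)) \<le> \<bar>h x\<bar> * cmod (\<Phi> x)"
        using complex_Re_le_cmod[of "complex_of_real (h x) * cnj (\<Phi> x)"] by (simp add: norm_mult)
      ultimately show ?thesis using True by simp
    qed (use supp T in simp)
  qed (use integrable_Re[OF int_h\<Phi>] h2 int_\<Phi> in auto)
  also have "\<dots> = T * (LINT x|lebesgue. (h x)\<^sup>2) + S / 2"
    using h2 int_\<Phi> integral_\<Phi> T by simp
  finally have "S \<le> 2 * T * (LINT x|lebesgue. (h x)\<^sup>2)" by linarith
  then show ?thesis unfolding S_def c_def e_def by (simp add: cis_cnj)
qed

lemma nn_integral_indicator_Ico_shift:
  fixes q :: "real \<Rightarrow> real"
  assumes [measurable]: "q \<in> borel_measurable borel"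
  shows "(\<integral>\<^sup>+ s. indicator {t..<t + \<omega>} s * ennreal (q s) \<partial>lborel) =
    (\<integral>\<^sup>+ \<sigma>. indicator {0..<\<omega>} \<sigma> * ennreal (q (\<sigma> + t)) \<partial>lborel)"
proof -
  have "(\<integral>\<^sup>+ s. indicator {t..<t + \<omega>} s * ennreal (q s) \<partial>lborel) =
      (\<integral>\<^sup>+ s. indicator {t..<t + \<omega>} s * ennreal (q s) \<partial>distr lborel borel ((+) t))"
    by (simp add: lborel_distr_plus)
  also have "\<dots> = (\<integral>\<^sup>+ \<sigma>. indicator {t..<t + \<omega>} (t + \<sigma>) * ennreal (q (t + \<sigma>)) \<partial>lborel)"
    by (rule nn_integral_distr) auto
  also have "\<dots> = (\<integral>\<^sup>+ \<sigma>. indicator {0..<\<omega>} \<sigma> * ennreal (q (\<sigma> + t)) \<partial>lborel)"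
    by (intro nn_integral_cong) (auto simp: indicator_def algebra_simps)
  finally show ?thesis .
qed

text \<open>Cut the block into the cells \<open>[k \<omega>, (k + 1) \<omega>)\<close> and shift every cell to \<open>[0, \<omega>)\<close>.\<close>

lemma nn_integral_block_le_of_shifted_sums_le:
  fixes q :: "real \<Rightarrow> real" and \<omega> M :: real
  assumes \<omega>: "\<omega> > 0" and [measurable]: "q \<in> borel_measurable borel" and q: "\<And>s. 0 \<le> q s"
    and sums: "\<And>J \<sigma>. finite J \<Longrightarrow> (\<Sum>k\<in>J. q (\<sigma> + of_int k * \<omega>)) \<le> M"
  shows "(\<integral>\<^sup>+ s. indicator {- real N * \<omega> ..< real N * \<omega>} s * ennreal (q s) \<partial>lborel) \<le> ennreal (\<omega> * M)"
proof -
  define P where "P k = {of_int k * \<omega> ..< of_int k * \<omega> + \<omega>}" for k :: int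
  let ?K = "{- int N ..< int N}"
  have cover: "indicator {- real N * \<omega> ..< real N * \<omega>} s \<le> (\<Sum>k\<in>?K. indicator (P k) s :: ennreal)" for s
  proof (cases "s \<in> {- real N * \<omega> ..< real N * \<omega>}")
    case True
    define k where "k = \<lfloor>s / \<omega>\<rfloor>"
    have k: "of_int k * \<omega> \<le> s" "s < (of_int k + 1) * \<omega>"
      unfolding k_def using \<omega> by (metis floor_divide_lower, metis floor_divide_upper)
    have "- real N < of_int k + 1" using True k(2) \<omega>
      by (smt (verit, ccfv_SIG) atLeastLessThan_iff mult_le_cancel_right)
    moreover have "of_int k < real N" using True k(1) \<omega>
      by (smt (verit, ccfv_SIG) atLeastLessThan_iff mult_le_cancel_right)
    ultimately have "k \<in> ?K" by auto
    with k show ?thesis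
      using member_le_sum[of k ?K "\<lambda>k. indicator (P k) s :: ennreal"] True
      by (simp add: P_def algebra_simps)
  qed simp
  have M: "0 \<le> M" using sums[of "{}"] by simp
  have "(\<integral>\<^sup>+ s. indicator {- real N * \<omega> ..< real N * \<omega>} s * ennreal (q s) \<partial>lborel) \<le>
      (\<integral>\<^sup>+ s. (\<Sum>k\<in>?K. indicator (P k) s * ennreal (q s)) \<partial>lborel)"
    using cover by (intro nn_integral_mono) (simp add: sum_distrib_right[symmetric] mult_right_mono)
  also have "\<dots> = (\<Sum>k\<in>?K. \<integral>\<^sup>+ s. indicator (P k) s * ennreal (q s) \<partial>lborel)"
    by (rule nn_integral_sum) (auto simp: P_def)
  also have "\<dots> = (\<Sum>k\<in>?K. \<integral>\<^sup>+ \<sigma>. indicator {0..<\<omega>} \<sigma> * ennreal (q (\<sigma> + of_int k * \<omega>)) \<partial>lborel)"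
    unfolding P_def by (simp only: nn_integral_indicator_Ico_shift[OF assms(2)])
  also have "\<dots> = (\<integral>\<^sup>+ \<sigma>. (\<Sum>k\<in>?K. indicator {0..<\<omega>} \<sigma> * ennreal (q (\<sigma> + of_int k * \<omega>))) \<partial>lborel)"
    by (rule nn_integral_sum[symmetric]) auto
  also have "\<dots> \<le> (\<integral>\<^sup>+ \<sigma>. indicator {0..<\<omega>} \<sigma> * ennreal M \<partial>lborel)"
  proof (rule nn_integral_mono)
    fix \<sigma>
    have "(\<Sum>k\<in>?K. indicator {0..<\<omega>} \<sigma> * ennreal (q (\<sigma> + of_int k * \<omega>))) =
        indicator {0..<\<omega>} \<sigma> * ennreal (\<Sum>k\<in>?K. q (\<sigma> + of_int k * \<omega>))"
      by (simp add: sum_distrib_left[symmetric] q)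
    also have "\<dots> \<le> indicator {0..<\<omega>} \<sigma> * ennreal M"
      using sums[of ?K \<sigma>] by (intro mult_left_mono ennreal_leI) auto
    finally show "(\<Sum>k\<in>?K. indicator {0..<\<omega>} \<sigma> * ennreal (q (\<sigma> + of_int k * \<omega>))) \<le>
        indicator {0..<\<omega>} \<sigma> * ennreal M" .
  qed
  also have "\<dots> = ennreal (\<omega> * M)"
    using \<omega> M by (simp add: nn_integral_cmult_indicator ennreal_mult[symmetric] mult.commute)
  finally show ?thesis .
qed

lemma nn_integral_le_of_shifted_sums_le:
  fixes q :: "real \<Rightarrow> real" and \<omega> M :: real
  assumes \<omega>: "\<omega> > 0" and [measurable]: "q \<in> borel_measurable borel" and q: "\<And>s. 0 \<le> q s"
    and sums: "\<And>J \<sigma>. finite J \<Longrightarrow> (\<Sum>k\<in>J. q (\<sigma> + of_int k * \<omega>)) \<le> M"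
  shows "(\<integral>\<^sup>+ s. ennreal (q s) \<partial>lborel) \<le> ennreal (\<omega> * M)"
proof -
  define B where "B N = {- real N * \<omega> ..< real N * \<omega>}" for N :: nat
  have "(\<integral>\<^sup>+ s. ennreal (q s) \<partial>lborel) = (\<integral>\<^sup>+ s. (SUP N. indicator (B N) s * ennreal (q s)) \<partial>lborel)"
  proof (rule nn_integral_cong)
    fix s :: real
    obtain N :: nat where "\<bar>s\<bar> / \<omega> < real N" using reals_Archimedean2 by blast
    then have "s \<in> B N" using \<omega> by (auto simp: B_def divide_less_eq)
    then show "ennreal (q s) = (SUP N. indicator (B N) s * ennreal (q s))"
      by (intro antisym SUP_upper2[of N]) (auto intro!: SUP_least simp: indicator_def)
  qed
  also have "\<dots> = (SUP N. \<integral>\<^sup>+ s. indicator (B N) s * ennreal (q s) \<partial>lborel)"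
  proof (rule nn_integral_monotone_convergence_SUP)
    have "B N \<subseteq> B (Suc N)" for N unfolding B_def using \<omega> by (auto simp: algebra_simps)
    then show "incseq (\<lambda>N s. indicator (B N) s * ennreal (q s))"
      by (intro incseq_SucI le_funI) (auto simp: indicator_def)
  qed (auto simp: B_def)
  also have "\<dots> \<le> ennreal (\<omega> * M)"
    unfolding B_def using nn_integral_block_le_of_shifted_sums_le[OF \<omega> _ q sums] by (intro SUP_least) auto
  finally show ?thesis .
qed

lemma square_integrable_fourier1:
  fixes h :: "real \<Rightarrow> real" and T :: real
  assumes T: "T > 0" and hi: "integrable lebesgue h" and h2: "integrable lebesgue (\<lambda>x. (h x)\<^sup>2)"
    and supp: "\<And>x. x \<notin> {-T..T} \<Longrightarrow> h x = 0"
  shows "integrable lebesgue (\<lambda>s. (cmod (fourier1 h s))\<^sup>2)"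
proof -
  define q where "q s = (cmod (fourier1 h s))\<^sup>2" for s
  define H2 where "H2 = (LINT x|lebesgue. (h x)\<^sup>2)"
  have q_cont: "continuous_on UNIV q"
    unfolding q_def using continuous_on_fourier1[OF hi] by (intro continuous_intros) auto
  then have [measurable]: "q \<in> borel_measurable borel" by (rule borel_measurable_continuous_onI)
  have q: "0 \<le> q s" for s unfolding q_def by simp
  have q_eq: "q s = (cmod (LINT x|lebesgue. complex_of_real (h x) * cis (- (s * x))))\<^sup>2 / (2 * pi)"
    for s unfolding q_def fourier1_def by (simp add: norm_divide power_divide mult.commute)
  have "(\<Sum>k\<in>J. q (\<sigma> + of_int k * (pi / T))) \<le> (2 * T * H2) / (2 * pi)" if "finite J" for J \<sigma>
  proof -
    have "(\<Sum>k\<in>J. q (\<sigma> + of_int k * (pi / T))) = (\<Sum>k\<in>J. (cmod (LINT x|lebesgue.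
        complex_of_real (h x) * cis (- ((\<sigma> + of_int k * (pi / T)) * x))))\<^sup>2) / (2 * pi)"
      unfolding q_eq by (simp add: sum_divide_distrib)
    also have "\<dots> \<le> (2 * T * H2) / (2 * pi)"
      unfolding H2_def using pi_gt_zero
      by (intro divide_right_mono bessel_inequality_cis[OF T hi h2 supp that]) auto
    finally show ?thesis .
  qed
  then have "(\<integral>\<^sup>+ s. ennreal (q s) \<partial>lborel) \<le> ennreal (pi / T * ((2 * T * H2) / (2 * pi)))"
    using T by (intro nn_integral_le_of_shifted_sums_le q) auto
  then have "integrable lborel q"
    using q by (intro integrableI_bounded) (auto simp: top.not_eq_extremum order_le_less_trans)
  then show ?thesis unfolding q_def[symmetric] by (subst integrable_completion) auto
qed

lemma AE_eq_if_square_mean_tendsto: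
  fixes F :: "nat \<Rightarrow> 'a \<Rightarrow> complex" and G H :: "'a \<Rightarrow> complex"
  assumes [measurable]: "\<And>n. F n \<in> borel_measurable M" "G \<in> borel_measurable M" "H \<in> borel_measurable M"
    and int: "\<And>n. integrable M (\<lambda>s. (cmod (F n s - H s))\<^sup>2)"
    and mean: "(\<lambda>n. LINT s|M. (cmod (F n s - H s))\<^sup>2) \<longlonglongrightarrow> 0"
    and pointwise: "\<And>s. (\<lambda>n. F n s) \<longlonglongrightarrow> G s"
  shows "AE s in M. H s = G s"
proof -
  have "(\<integral>\<^sup>+ s. ennreal ((cmod (G s - H s))\<^sup>2) \<partial>M) =
      (\<integral>\<^sup>+ s. liminf (\<lambda>n. ennreal ((cmod (F n s - H s))\<^sup>2)) \<partial>M)"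
    using pointwise by (intro nn_integral_cong lim_imp_Liminf[symmetric] tendsto_ennrealI tendsto_intros) auto
  also have "\<dots> \<le> liminf (\<lambda>n. \<integral>\<^sup>+ s. ennreal ((cmod (F n s - H s))\<^sup>2) \<partial>M)"
    by (rule nn_integral_liminf) measurable
  also have "\<dots> = liminf (\<lambda>n. ennreal (LINT s|M. (cmod (F n s - H s))\<^sup>2))"
    using int by (simp add: nn_integral_eq_integral)
  also have "\<dots> = 0"
    using mean by (intro lim_imp_Liminf tendsto_ennrealI[where x=0, simplified]) auto
  finally have "(\<integral>\<^sup>+ s. ennreal ((cmod (G s - H s))\<^sup>2) \<partial>M) = 0" by simp
  then have "AE s in M. ennreal ((cmod (G s - H s))\<^sup>2) = 0"
    by (subst (asm) nn_integral_0_iff_AE) auto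
  then show ?thesis by eventually_elim simp
qed

lemma abs_powr_2: "\<bar>a::real\<bar> powr 2 = a\<^sup>2"
  by (cases "a = 0") (simp_all add: powr_numeral)

lemma is_fourier2_imp_AE_eq_fourier1:
  fixes h :: "real \<Rightarrow> real" and H :: "real \<Rightarrow> complex"
  assumes hi: "integrable lebesgue h" and h2: "Lp_real 2 h" and H: "is_fourier2 h H"
  shows "AE s in lebesgue. H s = fourier1 h s"
proof -
  define hn where "hn n x = indicator {-real n..real n} x * h x" for n :: nat and x
  have [measurable]: "h \<in> borel_measurable lebesgue" using hi by auto
  have [measurable]: "H \<in> borel_measurable lebesgue" and H2: "integrable lebesgue (\<lambda>s. (cmod (H s))\<^sup>2)"
    and mean: "(\<lambda>n. LINT s|lebesgue. (cmod (fourier1 (hn n) s - H s))\<^sup>2) \<longlonglongrightarrow> 0"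
    using H unfolding is_fourier2_def hn_def by auto
  have [measurable]: "hn n \<in> borel_measurable lebesgue" for n
    unfolding hn_def using borel_measurable_indicator[OF sets_lebesgue_Icc] by measurable
  have hn_int: "integrable lebesgue (hn n)" for n
    by (rule Bochner_Integration.integrable_bound[OF hi]) (auto simp: hn_def indicator_def)
  have h_sq: "integrable lebesgue (\<lambda>x. (h x)\<^sup>2)" using h2 unfolding Lp_real_def abs_powr_2 by simp
  have "integrable lebesgue (\<lambda>x. (hn n x)\<^sup>2)" for n
  proof (rule Bochner_Integration.integrable_bound[OF h_sq])
    show "(\<lambda>x. (hn n x)\<^sup>2) \<in> borel_measurable lebesgue" by measurable
  qed (auto simp: hn_def indicator_def)
  then have F_sq: "integrable lebesgue (\<lambda>s. (cmod (fourier1 (hn n) s))\<^sup>2)" for n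
    by (intro square_integrable_fourier1[of "real n + 1"] hn_int) (auto simp: hn_def indicator_def)
  have [measurable]: "fourier1 g \<in> borel_measurable lebesgue" if "integrable lebesgue g" for g
    using borel_measurable_continuous_onI[OF continuous_on_fourier1[OF that]]
    by (auto intro: measurable_completion)
  show ?thesis
  proof (rule AE_eq_if_square_mean_tendsto[OF _ _ _ _ mean])
    show "integrable lebesgue (\<lambda>s. (cmod (fourier1 (hn n) s - H s))\<^sup>2)" for n
    proof (rule Bochner_Integration.integrable_bound)
      show "integrable lebesgue (\<lambda>s. 2 * (cmod (fourier1 (hn n) s))\<^sup>2 + 2 * (cmod (H s))\<^sup>2)"
        using F_sq[of n] H2 by auto
      have "(cmod (a - b))\<^sup>2 \<le> 2 * (cmod a)\<^sup>2 + 2 * (cmod b)\<^sup>2" for a b :: complex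
      proof -
        have "(cmod (a - b))\<^sup>2 \<le> (cmod a + cmod b)\<^sup>2"
          using norm_triangle_ineq4[of a b] by (intro power_mono) auto
        also have "\<dots> \<le> 2 * (cmod a)\<^sup>2 + 2 * (cmod b)\<^sup>2"
          unfolding power2_sum using sum_squares_bound[of "cmod a" "cmod b"] by linarith
        finally show ?thesis .
      qed
      then show "AE s in lebesgue. norm ((cmod (fourier1 (hn n) s - H s))\<^sup>2) \<le>
          norm (2 * (cmod (fourier1 (hn n) s))\<^sup>2 + 2 * (cmod (H s))\<^sup>2)"
        by simp
    qed (use hn_int in measurable)
    show "(\<lambda>n. fourier1 (hn n) s) \<longlonglongrightarrow> fourier1 h s" for s
      unfolding hn_def by (rule tendsto_fourier1_truncation[OF hi])
  qed (use hn_int hi in measurable)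
qed

lemma is_fourier_p_imp_AE_eq_fourier1:
  fixes f :: "real \<Rightarrow> real" and G :: "real \<Rightarrow> complex"
  assumes int: "integrable lebesgue f" and G: "is_fourier_p p f G"
  shows "AE s in lebesgue. G s = fourier1 f s"
proof (cases "p = 1")
  case False
  then obtain f1 f2 H where f: "\<And>x. f x = f1 x + f2 x" and int1: "integrable lebesgue f1"
    and f2: "Lp_real 2 f2" and H: "is_fourier2 f2 H" and G: "AE s in lebesgue. G s = fourier1 f1 s + H s"
    using G unfolding is_fourier_p_def by auto
  have f_eq: "f = (\<lambda>x. f1 x + f2 x)" using f by auto
  have int2: "integrable lebesgue f2"
    using Bochner_Integration.integrable_diff[OF int int1] by (simp add: f)
  show ?thesis
    using G is_fourier2_imp_AE_eq_fourier1[OF int2 f2 H]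
    by eventually_elim (simp add: f_eq fourier1_add[OF int1 int2])
qed (use G in \<open>simp add: is_fourier_p_def\<close>)

theorem mainTheorem9:
  fixes p :: real and f :: "real \<Rightarrow> real" and G :: "real \<Rightarrow> complex"
  assumes "1 \<le> p" and "p \<le> 2"
    and "Lp_real p f"
    and "Lp_real p (\<lambda>t. t * f t)" and "BV0 (\<lambda>t. t * f t)"
    and "is_fourier_p p f G"
  shows "\<exists>g. (AE s in lebesgue. g s = - Im (G s)) \<and> ACG_star g"
proof -
  have int: "integrable lebesgue f"
    using integrable_if_Lp_real_weighted assms(1-4) .
  have bv: "bounded_variation_R (\<lambda>t. t * f t)"
    using assms(5) unfolding BV0_def by simp
  have "AE s in lebesgue. - Im (fourier1 f s) = - Im (G s)"
    using is_fourier_p_imp_AE_eq_fourier1[OF int assms(6)] by eventually_elim simp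
  then show ?thesis
    using ACG_star_minus_Im_fourier1[OF int bv] by (intro exI[of _ "\<lambda>s. - Im (fourier1 f s)"] conjI)
qed

end
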